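(* Let $N$ be a lattice of rank $n$, let $\sigma\subseteq N_\mathbb{Q}$ be a strongly convex rational polyhedral cone having a $k$-dimensional regular face $\tau$, and let $G_{\bar\chi}=\mathbb{G}_a^k\rtimes T$ be any group as below with $\dim T=n-k$. Then there exists a monoid structure on $X_\sigma$ whose group of invertible elements is isomorphic to $G_{\bar\chi}$.
   Context: $\mathbb{K}$ algebraically closed of characteristic zero. $M$ is the dual lattice, $S_\sigma=\sigma^\vee\cap M$, $X_\sigma=\operatorname{Spec}\bigoplus_{u\in S_\sigma}\mathbb{K}\chi^u$ is the associated affine toric variety. A face is regular if the primitive vectors on its rays are part of a basis of $N$. For a torus $T$ and characters $\chi_1,\ldots,\chi_k$ of $T$, $G_{\bar\chi}=\mathbb{G}_a^k\rtimes T$ is the algebraic group with multiplication $(\bar\alpha,t)(\bar\alpha',t')=(\bar\alpha+(\chi_1(t)\alpha'_1,\ldots,\chi_k(t)\alpha'_k),tt')$. A monoid structure on a variety $X$ is an associative morphism $X\times X\to X$ with a neutral element. *)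

theory Defs
  imports "HOL-Computational_Algebra.Polynomial"
begin

definition alg_closed :: "'a::field itself \<Rightarrow> bool" where
  "alg_closed _ = (\<forall>p::'a poly. degree p > 0 \<longrightarrow> (\<exists>x. poly p x = 0))"

(* The lattice N = M = Z^n, vectors as nat-indexed functions vanishing at indices \<ge> n *)
definition lat :: "nat \<Rightarrow> (nat \<Rightarrow> int) set" where
  "lat n = {v. \<forall>i\<ge>n. v i = 0}"

definition qcone :: "(nat \<Rightarrow> int) set \<Rightarrow> (nat \<Rightarrow> rat) set" where
  "qcone V = {x. \<exists>l. (\<forall>v\<in>V. l v \<ge> 0) \<and> x = (\<lambda>i. \<Sum>v\<in>V. l v * of_int (v i))}"

definition strongly_convex :: "(nat \<Rightarrow> rat) set \<Rightarrow> bool" where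
  "strongly_convex C = (\<forall>x. x \<in> C \<and> (\<lambda>i. - x i) \<in> C \<longrightarrow> x = (\<lambda>i. 0))"

(* S_sigma = sigma^vee \<inter> M for sigma = qcone V *)
definition dual_monoid :: "nat \<Rightarrow> (nat \<Rightarrow> int) set \<Rightarrow> (nat \<Rightarrow> int) set" where
  "dual_monoid n V = {u \<in> lat n. \<forall>v\<in>V. 0 \<le> (\<Sum>i<n. u i * v i)}"

definition is_face :: "nat \<Rightarrow> (nat \<Rightarrow> rat) set \<Rightarrow> (nat \<Rightarrow> rat) set \<Rightarrow> bool" where
  "is_face n C F = (\<exists>u::nat \<Rightarrow> rat. (\<forall>x\<in>C. 0 \<le> (\<Sum>i<n. u i * x i))
       \<and> F = {x \<in> C. (\<Sum>i<n. u i * x i) = 0})"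

definition zbasis :: "nat \<Rightarrow> (nat \<Rightarrow> nat \<Rightarrow> int) \<Rightarrow> bool" where
  "zbasis n B = ((\<forall>i<n. B i \<in> lat n)
     \<and> (\<forall>w\<in>lat n. \<exists>c. w = (\<lambda>j. \<Sum>i<n. c i * B i j))
     \<and> (\<forall>c. (\<lambda>j. \<Sum>i<n. c i * B i j) = (\<lambda>j. 0) \<longrightarrow> (\<forall>i<n. c i = 0)))"

definition regular_face :: "nat \<Rightarrow> (nat \<Rightarrow> rat) set \<Rightarrow> nat \<Rightarrow> bool" where
  "regular_face n F k = (k \<le> n \<and> (\<exists>B. zbasis n B \<and> F = qcone (B ` {..<k})))"

(* K-points of X_sigma = Spec K[S]: monoid homomorphisms S \<rightarrow> multiplicative K, extended by 0 off S *)
definition toric_pts :: "(nat \<Rightarrow> int) set \<Rightarrow> ((nat \<Rightarrow> int) \<Rightarrow> 'K::field) set" where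
  "toric_pts S = {x. x (\<lambda>_. 0) = 1 \<and> (\<forall>u\<in>S. \<forall>w\<in>S. x (\<lambda>i. u i + w i) = x u * x w)
                    \<and> (\<forall>u. u \<notin> S \<longrightarrow> x u = 0)}"

(* regular functions on X_sigma: K-linear combinations of characters chi^u, u \<in> S *)
definition toric_regular :: "(nat \<Rightarrow> int) set \<Rightarrow> (((nat \<Rightarrow> int) \<Rightarrow> 'K::field) \<Rightarrow> 'K) \<Rightarrow> bool" where
  "toric_regular S f = (\<exists>F c. finite F \<and> F \<subseteq> S \<and>
      (\<forall>x\<in>toric_pts S. f x = (\<Sum>u\<in>F. c u * x u)))"

definition toric_regular2 :: "(nat \<Rightarrow> int) set \<Rightarrow>
     (((nat \<Rightarrow> int) \<Rightarrow> 'K::field) \<Rightarrow> ((nat \<Rightarrow> int) \<Rightarrow> 'K) \<Rightarrow> 'K) \<Rightarrow> bool" where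
  "toric_regular2 S f = (\<exists>F c. finite F \<and> F \<subseteq> S \<times> S \<and>
      (\<forall>x\<in>toric_pts S. \<forall>y\<in>toric_pts S. f x y = (\<Sum>(u,w)\<in>F. c (u,w) * x u * y w)))"

definition monoid_structure :: "(nat \<Rightarrow> int) set \<Rightarrow>
     (((nat \<Rightarrow> int) \<Rightarrow> 'K::field) \<Rightarrow> ((nat \<Rightarrow> int) \<Rightarrow> 'K) \<Rightarrow> ((nat \<Rightarrow> int) \<Rightarrow> 'K))
     \<Rightarrow> ((nat \<Rightarrow> int) \<Rightarrow> 'K) \<Rightarrow> bool" where
  "monoid_structure S mu e = (e \<in> toric_pts S
     \<and> (\<forall>x\<in>toric_pts S. \<forall>y\<in>toric_pts S. mu x y \<in> toric_pts S)
     \<and> (\<forall>u\<in>S. toric_regular2 S (\<lambda>x y. mu x y u))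
     \<and> (\<forall>x\<in>toric_pts S. \<forall>y\<in>toric_pts S. \<forall>z\<in>toric_pts S. mu (mu x y) z = mu x (mu y z))
     \<and> (\<forall>x\<in>toric_pts S. mu e x = x \<and> mu x e = x))"

definition monoid_units :: "(nat \<Rightarrow> int) set \<Rightarrow>
     (((nat \<Rightarrow> int) \<Rightarrow> 'K::field) \<Rightarrow> ((nat \<Rightarrow> int) \<Rightarrow> 'K) \<Rightarrow> ((nat \<Rightarrow> int) \<Rightarrow> 'K))
     \<Rightarrow> ((nat \<Rightarrow> int) \<Rightarrow> 'K) \<Rightarrow> ((nat \<Rightarrow> int) \<Rightarrow> 'K) set" where
  "monoid_units S mu e = {x \<in> toric_pts S. \<exists>y\<in>toric_pts S. mu x y = e \<and> mu y x = e}"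

(* functions on a subset G of X_sigma that are locally (on basic opens) quotients of
   regular functions, i.e. regular functions on the subvariety G *)
definition loc_regular :: "(nat \<Rightarrow> int) set \<Rightarrow> ((nat \<Rightarrow> int) \<Rightarrow> 'K::field) set
     \<Rightarrow> (((nat \<Rightarrow> int) \<Rightarrow> 'K) \<Rightarrow> 'K) \<Rightarrow> bool" where
  "loc_regular S G f = (\<forall>p\<in>G. \<exists>g h. toric_regular S g \<and> toric_regular S h \<and> h p \<noteq> 0 \<and>
      (\<forall>q\<in>G. h q \<noteq> 0 \<longrightarrow> f q * h q = g q))"

(* K-points of G_chi = G_a^k \<rtimes> T, T = (G_m)^m; pairs (a,t), canonical zero padding *)
definition gchi_pts :: "nat \<Rightarrow> nat \<Rightarrow> ((nat \<Rightarrow> 'K::field) \<times> (nat \<Rightarrow> 'K)) set" where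
  "gchi_pts k m = {(a,t). (\<forall>i\<ge>k. a i = 0) \<and> (\<forall>j<m. t j \<noteq> 0) \<and> (\<forall>j\<ge>m. t j = 0)}"

definition chr :: "nat \<Rightarrow> (nat \<Rightarrow> int) \<Rightarrow> (nat \<Rightarrow> 'K::field) \<Rightarrow> 'K" where
  "chr m c t = (\<Prod>j<m. t j powi c j)"

definition gchi_mult :: "nat \<Rightarrow> nat \<Rightarrow> (nat \<Rightarrow> nat \<Rightarrow> int) \<Rightarrow>
     (nat \<Rightarrow> 'K::field) \<times> (nat \<Rightarrow> 'K) \<Rightarrow> (nat \<Rightarrow> 'K) \<times> (nat \<Rightarrow> 'K) \<Rightarrow> (nat \<Rightarrow> 'K) \<times> (nat \<Rightarrow> 'K)" where
  "gchi_mult k m chi g h = (case g of (a,t) \<Rightarrow> case h of (a',t') \<Rightarrow>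
     ((\<lambda>i. if i < k then a i + chr m (chi i) t * a' i else 0),
      (\<lambda>j. if j < m then t j * t' j else 0)))"

(* regular functions on G_chi = A^k \<times> (G_m)^m : polynomial in a, Laurent polynomial in t *)
definition gchi_regular :: "nat \<Rightarrow> nat \<Rightarrow> ((nat \<Rightarrow> 'K::field) \<times> (nat \<Rightarrow> 'K) \<Rightarrow> 'K) \<Rightarrow> bool" where
  "gchi_regular k m f = (\<exists>F c. finite F \<and>
      F \<subseteq> {(p::nat \<Rightarrow> nat, q::nat \<Rightarrow> int). (\<forall>i\<ge>k. p i = 0) \<and> (\<forall>j\<ge>m. q j = 0)} \<and>
      (\<forall>(a,t)\<in>gchi_pts k m. f (a,t) =
          (\<Sum>(p,q)\<in>F. c (p,q) * (\<Prod>i<k. a i ^ p i) * (\<Prod>j<m. t j powi q j))))"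

definition units_iso_gchi :: "(nat \<Rightarrow> int) set \<Rightarrow>
     (((nat \<Rightarrow> int) \<Rightarrow> 'K::field) \<Rightarrow> ((nat \<Rightarrow> int) \<Rightarrow> 'K) \<Rightarrow> ((nat \<Rightarrow> int) \<Rightarrow> 'K))
     \<Rightarrow> ((nat \<Rightarrow> int) \<Rightarrow> 'K) \<Rightarrow> nat \<Rightarrow> nat \<Rightarrow> (nat \<Rightarrow> nat \<Rightarrow> int) \<Rightarrow> bool" where
  "units_iso_gchi S mu e k m chi = (\<exists>phi.
     bij_betw phi (gchi_pts k m) (monoid_units S mu e)
     \<and> (\<forall>g\<in>gchi_pts k m. \<forall>h\<in>gchi_pts k m. phi (gchi_mult k m chi g h) = mu (phi g) (phi h))
     \<and> (\<forall>u\<in>S. gchi_regular k m (\<lambda>g. phi g u))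
     \<and> (\<forall>i<k. loc_regular S (monoid_units S mu e) (\<lambda>x. fst (inv_into (gchi_pts k m) phi x) i))
     \<and> (\<forall>j<m. loc_regular S (monoid_units S mu e) (\<lambda>x. snd (inv_into (gchi_pts k m) phi x) j)))"

end

theory Submission
  imports Defs
begin

(* Choose a Z-basis B of N whose first k vectors span the regular face \<tau>, the dual basis D of M,
   and an integral linear form L that is nonnegative on \<sigma> and vanishes exactly on \<tau>.
   With p_i(u) = <u, B_i> for i < k, the group G_chi embeds into X_\<sigma> by
     \<chi>^u \<mapsto> \<Prod>_i a_i^(p_i(u)) \<Prod>_j t_j^(<u, B_(k+j)> + N <L, B_(k+j)> \<Sum>_i p_i(u)),
   and the binomial expansion of the group law in the coordinates a_i suggests the comultiplication
     \<chi>^u \<mapsto> \<Sum>_r binom(p(u), r) \<chi>^(u + \<Sum>_i r_i E_i) \<otimes> \<chi>^(u + \<Sum>_i (p_i(u) - r_i) F_i)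
   with E_i = -D_i + \<Sum>_j chi_ij D_(k+j) + N L and F_i = -D_i + N L.  On the rays of \<tau> the
   exponents stay nonnegative because 0 \<le> r \<le> p(u); on every other ray <L, v> \<ge> 1, so for
   large N the summand N L absorbs the negative parts.  That the product of two points is a point
   is Vandermonde's identity, and associativity is trinomial revision.  A unit is nonzero on every
   character vanishing on \<tau>, such as L and T_j = D_(k+j) + N L; with A_i = D_i + N L its
   preimage in G_chi is a_i = x(A_i) / x(L)^(2N), t_j = x(T_j) / x(L)^N. *)

section \<open>Multi-indices and binomial identities\<close>

definition multi_indices :: "nat \<Rightarrow> (nat \<Rightarrow> nat) \<Rightarrow> (nat \<Rightarrow> nat) set" where
  "multi_indices k P = {r. (\<forall>i<k. r i \<le> P i) \<and> (\<forall>i\<ge>k. r i = 0)}"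

definition multi_choose :: "nat \<Rightarrow> (nat \<Rightarrow> nat) \<Rightarrow> (nat \<Rightarrow> nat) \<Rightarrow> nat" where
  "multi_choose k P r = (\<Prod>i<k. P i choose r i)"

lemma multi_indicesD:
  assumes "r \<in> multi_indices k P"
  shows "i < k \<Longrightarrow> r i \<le> P i" and "k \<le> i \<Longrightarrow> r i = 0"
  using assms by (auto simp: multi_indices_def)

lemma multi_indices_0: "multi_indices 0 P = {\<lambda>_. 0}"
  by (auto simp: multi_indices_def)

lemma zero_in_multi_indices: "(\<lambda>_. 0) \<in> multi_indices k P"
  by (simp add: multi_indices_def)

lemma multi_indices_zero_bound: "multi_indices k (\<lambda>_. 0) = {\<lambda>_. 0}"
  by (auto simp: multi_indices_def) (metis le_zero_eq not_le)

lemma multi_indices_Suc: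
  "multi_indices (Suc k) P = (\<lambda>(r,j). r(k:=j)) ` (multi_indices k P \<times> {..P k})"
proof (intro set_eqI iffI)
  fix s assume s: "s \<in> multi_indices (Suc k) P"
  have "s = (s(k:=0))(k := s k)" by simp
  moreover have "s(k:=0) \<in> multi_indices k P" using s by (auto simp: multi_indices_def)
  moreover have "s k \<le> P k" using s by (auto simp: multi_indices_def)
  ultimately show "s \<in> (\<lambda>(r,j). r(k:=j)) ` (multi_indices k P \<times> {..P k})"
    by (intro rev_image_eqI[of "(s(k:=0), s k)"]) auto
next
  fix s assume "s \<in> (\<lambda>(r,j). r(k:=j)) ` (multi_indices k P \<times> {..P k})"
  then show "s \<in> multi_indices (Suc k) P" by (auto simp: multi_indices_def less_Suc_eq)
qed

lemma inj_on_multi_indices_Suc: "inj_on (\<lambda>(r,j). r(k:=j)) (multi_indices k P \<times> {..P k})"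
proof (rule inj_onI, clarsimp)
  fix r j r' j'
  assume r: "r \<in> multi_indices k P" and r': "r' \<in> multi_indices k P" and eq: "r(k := j) = r'(k := j')"
  then have "j = j'" by (metis fun_upd_same)
  moreover have "r = r'"
  proof
    fix i show "r i = r' i"
      using multi_indicesD(2)[OF r, of k] multi_indicesD(2)[OF r', of k] fun_cong[OF eq, of i]
      by (cases "i = k") auto
  qed
  ultimately show "r = r' \<and> j = j'" by simp
qed

lemma finite_multi_indices: "finite (multi_indices k P)"
  by (induction k) (auto simp: multi_indices_0 multi_indices_Suc)

lemma sum_multi_indices_Suc:
  "(\<Sum>s\<in>multi_indices (Suc k) P. f s) = (\<Sum>r\<in>multi_indices k P. \<Sum>j\<le>P k. f (r(k:=j)))"
  unfolding multi_indices_Suc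
  by (simp add: sum.reindex[OF inj_on_multi_indices_Suc] sum.cartesian_product prod.case_distrib)

lemma multi_choose_upd:
  "r \<in> multi_indices k P \<Longrightarrow> multi_choose (Suc k) P (r(k:=j)) = multi_choose k P r * (P k choose j)"
  unfolding multi_choose_def by (simp add: prod.lessThan_Suc)

lemma multi_choose_self: "multi_choose k P P = 1"
  by (simp add: multi_choose_def)

lemma multi_choose_zero: "multi_choose k P (\<lambda>_. 0) = 1"
  by (simp add: multi_choose_def)

lemma prod_binomial_multi_indices:
  fixes X Y :: "nat \<Rightarrow> 'a::comm_semiring_1"
  shows "(\<Prod>i<k. (X i + Y i) ^ P i)
       = (\<Sum>r\<in>multi_indices k P. of_nat (multi_choose k P r) * (\<Prod>i<k. X i ^ (P i - r i) * Y i ^ r i))"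
proof (induction k)
  case 0 then show ?case by (simp add: multi_indices_0 multi_choose_def)
next
  case (Suc k)
  have "(\<Prod>i<Suc k. (X i + Y i) ^ P i) = (\<Prod>i<k. (X i + Y i) ^ P i) * (Y k + X k) ^ P k"
    by (simp add: add.commute)
  also have "\<dots> = (\<Sum>r\<in>multi_indices k P. of_nat (multi_choose k P r) * (\<Prod>i<k. X i ^ (P i - r i) * Y i ^ r i))
      * (\<Sum>j\<le>P k. of_nat (P k choose j) * Y k ^ j * X k ^ (P k - j))"
    by (subst binomial_ring[of "Y k" "X k"], simp add: Suc.IH)
  also have "\<dots> = (\<Sum>r\<in>multi_indices k P. \<Sum>j\<le>P k. of_nat (multi_choose k P r) * (\<Prod>i<k. X i ^ (P i - r i) * Y i ^ r i)
      * (of_nat (P k choose j) * Y k ^ j * X k ^ (P k - j)))"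
    by (rule sum_product)
  also have "\<dots> = (\<Sum>r\<in>multi_indices k P. \<Sum>j\<le>P k. of_nat (multi_choose (Suc k) P (r(k:=j))) *
       (\<Prod>i<Suc k. X i ^ (P i - (r(k:=j)) i) * Y i ^ (r(k:=j)) i))"
    by (intro sum.cong refl) (simp add: multi_choose_upd prod.lessThan_Suc mult_ac)
  also have "\<dots> = (\<Sum>r\<in>multi_indices (Suc k) P. of_nat (multi_choose (Suc k) P r) * (\<Prod>i<Suc k. X i ^ (P i - r i) * Y i ^ r i))"
    by (simp add: sum_multi_indices_Suc)
  finally show ?case .
qed

lemma sum_choose_Suc:
  fixes g :: "nat \<Rightarrow> 'a::comm_semiring_1"
  shows "(\<Sum>j\<le>Suc a. of_nat (Suc a choose j) * g j) = (\<Sum>j\<le>a. of_nat (a choose j) * (g j + g (Suc j)))"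
proof -
  have split_Suc: "(\<Sum>j\<le>Suc a. of_nat (Suc a choose j) * g j)
      = g 0 + (\<Sum>j\<le>a. of_nat (a choose j) * g (Suc j)) + (\<Sum>j\<le>a. of_nat (a choose Suc j) * g (Suc j))"
    by (subst sum.atMost_Suc_shift) (simp del: sum.atMost_Suc add: distrib_right sum.distrib add.assoc)
  have "g 0 + (\<Sum>j\<le>a. of_nat (a choose Suc j) * g (Suc j)) = (\<Sum>j\<le>Suc a. of_nat (a choose j) * g j)"
    by (subst sum.atMost_Suc_shift) (simp del: sum.atMost_Suc)
  also have "\<dots> = (\<Sum>j\<le>a. of_nat (a choose j) * g j)"
    by (simp add: binomial_eq_0)
  finally have shift: "g 0 + (\<Sum>j\<le>a. of_nat (a choose Suc j) * g (Suc j)) = (\<Sum>j\<le>a. of_nat (a choose j) * g j)" .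
  show ?thesis unfolding split_Suc distrib_left sum.distrib shift[symmetric] by (simp add: add_ac)
qed

lemma vandermonde_sum:
  fixes g :: "nat \<Rightarrow> 'a::comm_semiring_1"
  shows "(\<Sum>j\<le>a+b. of_nat (a+b choose j) * g j)
       = (\<Sum>i\<le>a. \<Sum>i'\<le>b. of_nat (a choose i) * of_nat (b choose i') * g (i+i'))"
proof (induction a arbitrary: g)
  case 0 then show ?case by simp
next
  case (Suc a)
  define h where "h i = (\<Sum>i'\<le>b. of_nat (b choose i') * g (i+i'))" for i
  have "(\<Sum>j\<le>Suc a+b. of_nat (Suc a+b choose j) * g j)
      = (\<Sum>j\<le>a+b. of_nat (a+b choose j) * (g j + g (Suc j)))"
    using sum_choose_Suc[of "a+b" g] by simp
  also have "\<dots> = (\<Sum>i\<le>a. \<Sum>i'\<le>b. of_nat (a choose i) * of_nat (b choose i') * (g (i+i') + g (Suc (i+i'))))"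
    by (rule Suc.IH)
  also have "\<dots> = (\<Sum>i\<le>a. of_nat (a choose i) * (h i + h (Suc i)))"
    by (simp add: h_def sum_distrib_left distrib_left sum.distrib mult_ac)
  also have "\<dots> = (\<Sum>i\<le>Suc a. of_nat (Suc a choose i) * h i)"
    by (rule sum_choose_Suc[symmetric])
  also have "\<dots> = (\<Sum>i\<le>Suc a. \<Sum>i'\<le>b. of_nat (Suc a choose i) * of_nat (b choose i') * g (i+i'))"
    by (simp add: h_def sum_distrib_left mult_ac)
  finally show ?case .
qed

lemma multi_vandermonde:
  fixes G :: "(nat \<Rightarrow> nat) \<Rightarrow> 'a::comm_semiring_1"
  shows "(\<Sum>s\<in>multi_indices k (\<lambda>i. P i + Q i). of_nat (multi_choose k (\<lambda>i. P i + Q i) s) * G s)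
       = (\<Sum>r\<in>multi_indices k P. \<Sum>r'\<in>multi_indices k Q.
            of_nat (multi_choose k P r) * of_nat (multi_choose k Q r') * G (\<lambda>i. r i + r' i))"
proof (induction k arbitrary: G)
  case 0 then show ?case by (simp add: multi_indices_0 multi_choose_def)
next
  case (Suc k)
  define G' where "G' s = (\<Sum>j\<le>P k + Q k. of_nat (P k + Q k choose j) * G (s(k:=j)))" for s
  have "(\<Sum>s\<in>multi_indices (Suc k) (\<lambda>i. P i + Q i). of_nat (multi_choose (Suc k) (\<lambda>i. P i + Q i) s) * G s)
     = (\<Sum>s\<in>multi_indices k (\<lambda>i. P i + Q i). of_nat (multi_choose k (\<lambda>i. P i + Q i) s) * G' s)"
    by (simp add: sum_multi_indices_Suc multi_choose_upd G'_def sum_distrib_left mult_ac)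
  also have "\<dots> = (\<Sum>r\<in>multi_indices k P. \<Sum>r'\<in>multi_indices k Q.
       of_nat (multi_choose k P r) * of_nat (multi_choose k Q r') * G' (\<lambda>i. r i + r' i))"
    by (rule Suc.IH)
  also have "\<dots> = (\<Sum>r\<in>multi_indices k P. \<Sum>r'\<in>multi_indices k Q. \<Sum>j\<le>P k. \<Sum>j'\<le>Q k.
       of_nat (multi_choose k P r) * of_nat (multi_choose k Q r') * (of_nat (P k choose j) * of_nat (Q k choose j') *
         G ((\<lambda>i. r i + r' i)(k := j + j'))))"
    by (simp add: G'_def vandermonde_sum sum_distrib_left)
  also have "\<dots> = (\<Sum>r\<in>multi_indices k P. \<Sum>j\<le>P k. \<Sum>r'\<in>multi_indices k Q. \<Sum>j'\<le>Q k.
       of_nat (multi_choose (Suc k) P (r(k:=j))) * of_nat (multi_choose (Suc k) Q (r'(k:=j'))) *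
         G (\<lambda>i. (r(k:=j)) i + (r'(k:=j')) i))"
  proof (intro sum.cong refl)
    fix r assume r: "r \<in> multi_indices k P"
    have upd: "(\<lambda>i. (if i = k then j else r i) + (if i = k then j' else r' i))
        = (\<lambda>i. r i + r' i)(k := j + j')" for j j' r'
      by auto
    show "(\<Sum>r'\<in>multi_indices k Q. \<Sum>j\<le>P k. \<Sum>j'\<le>Q k.
       of_nat (multi_choose k P r) * of_nat (multi_choose k Q r') * (of_nat (P k choose j) * of_nat (Q k choose j') *
         G ((\<lambda>i. r i + r' i)(k := j + j'))))
      = (\<Sum>j\<le>P k. \<Sum>r'\<in>multi_indices k Q. \<Sum>j'\<le>Q k.
       of_nat (multi_choose (Suc k) P (r(k:=j))) * of_nat (multi_choose (Suc k) Q (r'(k:=j'))) *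
         G (\<lambda>i. (r(k:=j)) i + (r'(k:=j')) i))"
      using r by (subst sum.swap[where A="multi_indices k Q"])
        (intro sum.cong refl, simp add: multi_choose_upd upd mult_ac)
  qed
  also have "\<dots> = (\<Sum>r\<in>multi_indices (Suc k) P. \<Sum>r'\<in>multi_indices (Suc k) Q.
       of_nat (multi_choose (Suc k) P r) * of_nat (multi_choose (Suc k) Q r') * G (\<lambda>i. r i + r' i))"
    by (simp add: sum_multi_indices_Suc)
  finally show ?case .
qed

lemma multi_choose_mult:
  assumes "r \<in> multi_indices k P" "s \<in> multi_indices k (\<lambda>i. P i - r i)"
  shows "multi_choose k P (\<lambda>i. r i + s i) * multi_choose k (\<lambda>i. r i + s i) r
       = multi_choose k P r * multi_choose k (\<lambda>i. P i - r i) s"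
  unfolding multi_choose_def prod.distrib[symmetric]
proof (intro prod.cong refl)
  fix i assume "i \<in> {..<k}"
  then have "r i \<le> P i" "s i \<le> P i - r i" using assms by (auto simp: multi_indices_def)
  then show "(P i choose (r i + s i)) * ((r i + s i) choose r i) = (P i choose r i) * ((P i - r i) choose s i)"
    using choose_mult[of "r i" "r i + s i" "P i"] by simp
qed

lemma multi_choose_coassoc:
  fixes J :: "(nat \<Rightarrow> nat) \<Rightarrow> (nat \<Rightarrow> nat) \<Rightarrow> 'a::comm_semiring_1"
  shows "(\<Sum>r'\<in>multi_indices k P. \<Sum>s'\<in>multi_indices k r'.
            of_nat (multi_choose k P r') * of_nat (multi_choose k r' s') * J r' s')
       = (\<Sum>r\<in>multi_indices k P. \<Sum>s\<in>multi_indices k (\<lambda>i. P i - r i).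
            of_nat (multi_choose k P r) * of_nat (multi_choose k (\<lambda>i. P i - r i) s) * J (\<lambda>i. r i + s i) r)"
proof -
  have "(\<Sum>r\<in>multi_indices k P. \<Sum>s\<in>multi_indices k (\<lambda>i. P i - r i).
            of_nat (multi_choose k P r) * of_nat (multi_choose k (\<lambda>i. P i - r i) s) * J (\<lambda>i. r i + s i) r)
     = (\<Sum>(r,s)\<in>(SIGMA r:multi_indices k P. multi_indices k (\<lambda>i. P i - r i)).
            of_nat (multi_choose k P r) * of_nat (multi_choose k (\<lambda>i. P i - r i) s) * J (\<lambda>i. r i + s i) r)"
    by (rule sum.Sigma) (auto simp: finite_multi_indices)
  also have "\<dots> = (\<Sum>(r',s')\<in>(SIGMA r':multi_indices k P. multi_indices k r').
            of_nat (multi_choose k P r') * of_nat (multi_choose k r' s') * J r' s')"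
  proof (rule sum.reindex_bij_witness[where i="\<lambda>(r',s'). (s', \<lambda>i. r' i - s' i)" and j="\<lambda>(r,s). (\<lambda>i. r i + s i, r)"])
    fix a assume a: "a \<in> (SIGMA r:multi_indices k P. multi_indices k (\<lambda>i. P i - r i))"
    then show "(\<lambda>(r', s'). (s', \<lambda>i. r' i - s' i)) ((\<lambda>(r, s). (\<lambda>i. r i + s i, r)) a) = a"
      by auto
    show "(\<lambda>(r, s). (\<lambda>i. r i + s i, r)) a \<in> (SIGMA r':multi_indices k P. multi_indices k r')"
      using a by (auto simp: multi_indices_def) (metis le_diff_conv2 add.commute)+
    show "(case (\<lambda>(r, s). (\<lambda>i. r i + s i, r)) a of (r', s') \<Rightarrow>
            of_nat (multi_choose k P r') * of_nat (multi_choose k r' s') * J r' s')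
        = (case a of (r, s) \<Rightarrow>
            of_nat (multi_choose k P r) * of_nat (multi_choose k (\<lambda>i. P i - r i) s) * J (\<lambda>i. r i + s i) r)"
      using a multi_choose_mult[of _ k P] by (auto simp flip: of_nat_mult)
  next
    fix b assume b: "b \<in> (SIGMA r':multi_indices k P. multi_indices k r')"
    obtain r' s' where b_eq: "b = (r', s')" by (cases b)
    have "(\<lambda>i. s' i + (r' i - s' i)) = r'"
    proof
      fix i show "s' i + (r' i - s' i) = r' i"
        using b b_eq by (cases "i < k") (auto simp: multi_indices_def)
    qed
    then show "(\<lambda>(r, s). (\<lambda>i. r i + s i, r)) ((\<lambda>(r', s'). (s', \<lambda>i. r' i - s' i)) b) = b"
      using b_eq by simp
    show "(\<lambda>(r', s'). (s', \<lambda>i. r' i - s' i)) b \<in> (SIGMA r:multi_indices k P. multi_indices k (\<lambda>i. P i - r i))"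
      using b by (auto simp: multi_indices_def) (meson diff_le_mono le_trans)+
  qed
  also have "\<dots> = (\<Sum>r'\<in>multi_indices k P. \<Sum>s'\<in>multi_indices k r'.
            of_nat (multi_choose k P r') * of_nat (multi_choose k r' s') * J r' s')"
    by (rule sum.Sigma[symmetric]) (auto simp: finite_multi_indices)
  finally show ?thesis by simp
qed

section \<open>The pairing between M and N\<close>

definition pairing :: "nat \<Rightarrow> (nat \<Rightarrow> int) \<Rightarrow> (nat \<Rightarrow> int) \<Rightarrow> int" where
  "pairing n u v = (\<Sum>i<n. u i * v i)"

lemma pairing_add_left: "pairing n (\<lambda>l. a l + b l) v = pairing n a v + pairing n b v"
  by (simp add: pairing_def distrib_right sum.distrib)

lemma pairing_uminus_left: "pairing n (\<lambda>l. - a l) v = - pairing n a v"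
  by (simp add: pairing_def sum_negf)

lemma pairing_scale_left: "pairing n (\<lambda>l. c * a l) v = c * pairing n a v"
  by (simp add: pairing_def sum_distrib_left mult_ac)

lemma pairing_sum_left: "pairing n (\<lambda>l. \<Sum>j\<in>J. f j l) v = (\<Sum>j\<in>J. pairing n (f j) v)"
  by (simp add: pairing_def sum_distrib_right sum.swap[of _ J])

lemma pairing_lincomb_left:
  "pairing n (\<lambda>l. u l + (\<Sum>i\<in>I. c i * W i l)) w = pairing n u w + (\<Sum>i\<in>I. c i * pairing n (W i) w)"
  by (simp add: pairing_add_left pairing_sum_left pairing_scale_left)

lemma of_int_pairing:
  "(of_int (pairing n u v) :: 'a::comm_ring_1) = (\<Sum>i<n. of_int (u i) * of_int (v i))"
  by (simp add: pairing_def)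

lemma lat_add: "a \<in> lat n \<Longrightarrow> b \<in> lat n \<Longrightarrow> (\<lambda>l. a l + b l) \<in> lat n"
  by (simp add: lat_def)

lemma lat_scale: "a \<in> lat n \<Longrightarrow> (\<lambda>l. c * a l) \<in> lat n"
  by (simp add: lat_def)

lemma lat_uminus: "a \<in> lat n \<Longrightarrow> (\<lambda>l. - a l) \<in> lat n"
  by (simp add: lat_def)

lemma lat_sum: "(\<And>j. j \<in> J \<Longrightarrow> f j \<in> lat n) \<Longrightarrow> (\<lambda>l. \<Sum>j\<in>J. f j l) \<in> lat n"
  by (simp add: lat_def)

lemma dual_monoid_pairing: "dual_monoid n V = {u \<in> lat n. \<forall>v\<in>V. 0 \<le> pairing n u v}"
  by (simp add: dual_monoid_def pairing_def)

lemma dual_monoid_lat: "u \<in> dual_monoid n V \<Longrightarrow> u \<in> lat n"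
  by (simp add: dual_monoid_def)

lemma dual_monoid_zero: "(\<lambda>_. 0) \<in> dual_monoid n V"
  by (simp add: dual_monoid_def lat_def)

lemma dual_monoid_add:
  "a \<in> dual_monoid n V \<Longrightarrow> b \<in> dual_monoid n V \<Longrightarrow> (\<lambda>l. a l + b l) \<in> dual_monoid n V"
  by (auto simp: dual_monoid_pairing lat_def pairing_add_left)

lemma toric_pts_zero: "x \<in> toric_pts S \<Longrightarrow> x (\<lambda>_. 0) = 1"
  by (simp add: toric_pts_def)

lemma toric_pts_add: "x \<in> toric_pts S \<Longrightarrow> a \<in> S \<Longrightarrow> b \<in> S \<Longrightarrow> x (\<lambda>i. a i + b i) = x a * x b"
  by (simp add: toric_pts_def)

lemma toric_pts_outside: "x \<in> toric_pts S \<Longrightarrow> u \<notin> S \<Longrightarrow> x u = 0"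
  by (simp add: toric_pts_def)

lemma toric_pts_scale:
  assumes x: "x \<in> toric_pts (dual_monoid n V)" and w: "w \<in> dual_monoid n V"
  shows "(\<lambda>l. int c * w l) \<in> dual_monoid n V \<and> x (\<lambda>l. int c * w l) = x w ^ c"
proof (induction c)
  case 0 then show ?case using dual_monoid_zero toric_pts_zero[OF x] by simp
next
  case (Suc c)
  have "(\<lambda>l. int (Suc c) * w l) = (\<lambda>l. w l + int c * w l)" by (simp add: algebra_simps)
  then show ?case using Suc w dual_monoid_add toric_pts_add[OF x] by simp
qed

lemma toric_pts_lincomb:
  assumes x: "x \<in> toric_pts (dual_monoid n V)" and I: "finite I"
    and w: "\<And>i. i \<in> I \<Longrightarrow> w i \<in> dual_monoid n V"
  shows "(\<lambda>l. \<Sum>i\<in>I. int (c i) * w i l) \<in> dual_monoid n V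
       \<and> x (\<lambda>l. \<Sum>i\<in>I. int (c i) * w i l) = (\<Prod>i\<in>I. x (w i) ^ c i)"
  using I w
proof (induction I rule: finite_induct)
  case empty then show ?case using dual_monoid_zero toric_pts_zero[OF x] by simp
next
  case (insert i I)
  have "(\<lambda>l. \<Sum>i\<in>insert i I. int (c i) * w i l) = (\<lambda>l. int (c i) * w i l + (\<Sum>i\<in>I. int (c i) * w i l))"
    using insert by simp
  then show ?case
    using insert toric_pts_scale[OF x, of "w i" "c i"] dual_monoid_add toric_pts_add[OF x] by simp
qed

lemma toric_regular_char: "w \<in> S \<Longrightarrow> toric_regular S (\<lambda>x. x w)"
  unfolding toric_regular_def by (rule exI[of _ "{w}"], rule exI[of _ "\<lambda>_. 1"]) simp

lemma loc_regular_char_quotient: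
  assumes "w \<in> S" and "w' \<in> S"
    and "\<And>x. x \<in> G \<Longrightarrow> x w' \<noteq> 0" and "\<And>x. x \<in> G \<Longrightarrow> f x * x w' = x w"
  shows "loc_regular S G f"
  unfolding loc_regular_def
  using assms toric_regular_char[of w S] toric_regular_char[of w' S] by blast

lemma power_int_sum: "(t::'a::field) \<noteq> 0 \<Longrightarrow> t powi (\<Sum>i\<in>I. f i) = (\<Prod>i\<in>I. t powi f i)"
  by (induction I rule: infinite_finite_induct) (auto simp: power_int_add)

lemma power_int_as_quotient: "(t::'a::field) \<noteq> 0 \<Longrightarrow> t powi q = t ^ nat q / t ^ nat (- q)"
  by (cases "q \<ge> 0") (auto simp: power_int_def field_simps)

lemma prod_zero_power: "(\<Prod>i<(k::nat). (0::'a::field) ^ p i) = (if \<forall>i<k. p i = 0 then 1 else 0)"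
  by (auto simp: power_0_left)

lemma solve_scaled_monomial_identity:
  fixes xu Lx :: "'a::field" and t a :: "nat \<Rightarrow> 'a" and p qp qm :: "nat \<Rightarrow> nat" and q :: "nat \<Rightarrow> int"
  assumes Lx: "Lx \<noteq> 0" and t: "\<And>j. j \<in> J \<Longrightarrow> t j \<noteq> 0" and I: "finite I" and J: "finite J"
    and q: "\<And>j. j \<in> J \<Longrightarrow> qp j = nat (q j) \<and> qm j = nat (- q j)"
    and R: "xu * (\<Prod>j\<in>J. (t j * Lx ^ N) ^ qm j) * Lx ^ (N * ((\<Sum>i\<in>I. p i) + (\<Sum>j\<in>J. qp j)))
          = (\<Prod>i\<in>I. (a i * Lx ^ (2 * N)) ^ p i) * (\<Prod>j\<in>J. (t j * Lx ^ N) ^ qp j) * Lx ^ (N * (\<Sum>j\<in>J. qm j))"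
  shows "xu = (\<Prod>i\<in>I. a i ^ p i) * (\<Prod>j\<in>J. t j powi q j) * Lx ^ (N * (\<Sum>i\<in>I. p i))"
proof -
  have T_scaled: "(\<Prod>j\<in>J. (t j * Lx ^ N) ^ c j) = (\<Prod>j\<in>J. t j ^ c j) * Lx ^ (N * (\<Sum>j\<in>J. c j))" for c
    by (simp add: power_mult_distrib prod.distrib power_mult[symmetric] power_sum sum_distrib_left)
  have A_scaled: "(\<Prod>i\<in>I. (a i * Lx ^ (2 * N)) ^ p i) = (\<Prod>i\<in>I. a i ^ p i) * Lx ^ (2 * N * (\<Sum>i\<in>I. p i))"
    by (simp add: power_mult_distrib prod.distrib power_mult[symmetric] power_sum sum_distrib_left)
  define Tm where "Tm = (\<Prod>j\<in>J. t j ^ qm j)"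
  define Tp where "Tp = (\<Prod>j\<in>J. t j ^ qp j)"
  define PA where "PA = (\<Prod>i\<in>I. a i ^ p i)"
  define SP where "SP = (\<Sum>i\<in>I. p i)"
  define SQp where "SQp = (\<Sum>j\<in>J. qp j)"
  define SQm where "SQm = (\<Sum>j\<in>J. qm j)"
  define Z where "Z = Lx ^ (N * SQm + N * SP + N * SQp)"
  have Z: "Z \<noteq> 0" using Lx by (simp add: Z_def)
  have Tm: "Tm \<noteq> 0" using t J by (simp add: Tm_def)
  have "xu * Tm * Z = PA * Tp * Lx ^ (N * SP) * Z"
  proof -
    have "xu * Tm * Z = xu * (Tm * Lx ^ (N * SQm)) * Lx ^ (N * (SP + SQp))"
      by (simp add: Z_def power_add distrib_left mult_ac)
    also have "\<dots> = PA * Lx ^ (2 * N * SP) * (Tp * Lx ^ (N * SQp)) * Lx ^ (N * SQm)"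
      using R unfolding T_scaled A_scaled Tm_def Tp_def PA_def SP_def SQp_def SQm_def .
    also have "\<dots> = PA * Tp * Lx ^ (N * SP) * Z"
    proof -
      have Lx_double: "Lx ^ (2 * N * SP) = Lx ^ (N * SP) * Lx ^ (N * SP)"
        by (metis power_add mult_2 add_mult_distrib)
      show ?thesis by (simp only: Lx_double Z_def power_add) (simp add: mult_ac)
    qed
    finally show ?thesis .
  qed
  then have "xu * Tm = PA * Tp * Lx ^ (N * SP)" using Z by simp
  then have "xu = PA * (Tp / Tm) * Lx ^ (N * SP)" using Tm by (simp add: field_simps)
  moreover have "(\<Prod>j\<in>J. t j powi q j) = Tp / Tm"
  proof -
    have "(\<Prod>j\<in>J. t j powi q j) = (\<Prod>j\<in>J. t j ^ qp j / t j ^ qm j)"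
      using t q by (intro prod.cong refl) (simp add: power_int_as_quotient)
    then show ?thesis by (simp add: prod_dividef Tp_def Tm_def)
  qed
  ultimately show ?thesis by (simp add: PA_def SP_def)
qed

lemma sum_lessThan_split:
  fixes k n :: nat
  assumes "k \<le> n"
  shows "(\<Sum>j<n. f j) = (\<Sum>j<k. f j) + (\<Sum>j<n-k. f (k + j) :: 'a::comm_monoid_add)"
proof -
  have "{..<n} = {..<k} \<union> {k..<n}" using assms by (auto intro: less_le_trans simp: not_le)
  then have "(\<Sum>j<n. f j) = (\<Sum>j<k. f j) + (\<Sum>j\<in>{k..<n}. f j)"
    by (metis sum.union_disjoint finite_lessThan finite_atLeastLessThan ivl_disj_int_one(2))
  also have "(\<Sum>j\<in>{k..<n}. f j) = (\<Sum>j<n-k. f (k + j))"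
    using assms by (intro sum.reindex_bij_witness[where j="\<lambda>j. j - k" and i="\<lambda>j. k + j"]) auto
  finally show ?thesis .
qed

lemma sum_mult_add_const:
  "(\<Sum>j\<in>J. c j * (X j + M * Y)) = (\<Sum>j\<in>J. c j * X j) + M * (\<Sum>j\<in>J. c j) * (Y :: int)"
  by (simp add: distrib_left sum.distrib sum_distrib_left sum_distrib_right mult_ac)

section \<open>The group G_chi\<close>

definition gchi_one :: "nat \<Rightarrow> (nat \<Rightarrow> 'K::field) \<times> (nat \<Rightarrow> 'K)" where
  "gchi_one m = (\<lambda>_. 0, \<lambda>j. if j < m then 1 else 0)"

definition gchi_inv :: "nat \<Rightarrow> nat \<Rightarrow> (nat \<Rightarrow> nat \<Rightarrow> int) \<Rightarrow>
     (nat \<Rightarrow> 'K::field) \<times> (nat \<Rightarrow> 'K) \<Rightarrow> (nat \<Rightarrow> 'K) \<times> (nat \<Rightarrow> 'K)" where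
  "gchi_inv k m chi g = ((\<lambda>i. if i < k then - fst g i / chr m (chi i) (snd g) else 0),
                         (\<lambda>j. if j < m then inverse (snd g j) else 0))"

lemma gchi_ptsD: "g \<in> gchi_pts k m \<Longrightarrow> j < m \<Longrightarrow> snd g j \<noteq> 0"
  by (auto simp: gchi_pts_def)

lemma gchi_inv_in_gchi_pts: "g \<in> gchi_pts k m \<Longrightarrow> gchi_inv k m chi g \<in> gchi_pts k m"
  by (auto simp: gchi_inv_def gchi_pts_def)

lemma chr_nonzero: "(\<And>j. j < m \<Longrightarrow> t j \<noteq> 0) \<Longrightarrow> chr m c t \<noteq> (0::'K::field)"
  by (simp add: chr_def)

lemma chr_inverse:
  "chr m c (\<lambda>j. if j < m then inverse (t j) else 0) = inverse (chr m c (t :: nat \<Rightarrow> 'K::field))"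
proof -
  have "chr m c (\<lambda>j. if j < m then inverse (t j) else 0) = (\<Prod>j<m. inverse (t j powi c j))"
    unfolding chr_def by (intro prod.cong refl) (simp add: power_int_inverse)
  also have "\<dots> = inverse (chr m c t)"
    using prod_inversef[of "\<lambda>j. t j powi c j" "{..<m}"] by (simp add: chr_def comp_def)
  finally show ?thesis .
qed

lemma prod_chr_power:
  assumes "\<And>j. j < m \<Longrightarrow> t j \<noteq> (0::'K::field)"
  shows "(\<Prod>i<k. chr m (chi i) t ^ r i) = (\<Prod>j<m. t j powi (\<Sum>i<k. int (r i) * chi i j))"
proof -
  have "(\<Prod>i<k. chr m (chi i) t ^ r i) = (\<Prod>i<k. \<Prod>j<m. t j powi (int (r i) * chi i j))"
    unfolding chr_def
      by (intro prod.cong refl) (simp add: prod_power_distrib power_int_power' ac_simps)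
  also have "\<dots> = (\<Prod>j<m. \<Prod>i<k. t j powi (int (r i) * chi i j))"
    by (rule prod.swap)
  also have "\<dots> = (\<Prod>j<m. t j powi (\<Sum>i<k. int (r i) * chi i j))"
    using assms by (intro prod.cong refl) (simp add: power_int_sum)
  finally show ?thesis .
qed

lemma gchi_mult_inv_right:
  assumes "g \<in> gchi_pts k m"
  shows "gchi_mult k m chi g (gchi_inv k m chi g) = gchi_one m"
proof -
  obtain a t where g: "g = (a, t)" by (cases g)
  have t: "j < m \<Longrightarrow> t j \<noteq> 0" for j using gchi_ptsD[OF assms] g by auto
  then have "chr m (chi i) t \<noteq> 0" for i by (rule chr_nonzero)
  with t show ?thesis by (auto simp: g gchi_mult_def gchi_inv_def gchi_one_def)
qed

lemma gchi_mult_inv_left: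
  assumes "g \<in> gchi_pts k m"
  shows "gchi_mult k m chi (gchi_inv k m chi g) g = gchi_one m"
proof -
  obtain a t where g: "g = (a, t)" by (cases g)
  have t: "j < m \<Longrightarrow> t j \<noteq> 0" for j using gchi_ptsD[OF assms] g by auto
  then have "chr m (chi i) t \<noteq> 0" for i by (rule chr_nonzero)
  with t show ?thesis
    by (auto simp: g gchi_mult_def gchi_inv_def gchi_one_def chr_inverse field_simps)
qed

section \<open>Exponents adapted to a regular face\<close>

(* B_0, ..., B_(k-1) span the face \<tau>, D is the dual basis and L a supporting form of \<tau>;
   face_ray_coords says that a ray on which L vanishes lies in the cone spanned by B_0, ..., B_(k-1). *)
locale face_adapted_data =
  fixes n k :: nat and V :: "(nat \<Rightarrow> int) set" and B D :: "nat \<Rightarrow> nat \<Rightarrow> int"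
    and L :: "nat \<Rightarrow> int" and N :: nat and chi :: "nat \<Rightarrow> nat \<Rightarrow> int"
  assumes k_le_n: "k \<le> n"
  and D_lat: "\<And>i. i < n \<Longrightarrow> D i \<in> lat n"
  and L_lat: "L \<in> lat n"
  and dual_basis: "\<And>i j. i < n \<Longrightarrow> j < n \<Longrightarrow> pairing n (D i) (B j) = (if i = j then 1 else 0)"
  and expand_dual_basis: "\<And>u. u \<in> lat n \<Longrightarrow> u = (\<lambda>l. \<Sum>j<n. pairing n u (B j) * D j l)"
  and L_face: "\<And>i. i < k \<Longrightarrow> pairing n L (B i) = 0"
  and L_nonneg: "\<And>v. v \<in> V \<Longrightarrow> 0 \<le> pairing n L v"
  and face_ray_coords: "\<And>v. v \<in> V \<Longrightarrow> pairing n L v = 0 \<Longrightarrow>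
      (\<forall>i<k. 0 \<le> pairing n (D i) v) \<and> (\<forall>w. pairing n w v = (\<Sum>i<k. pairing n (D i) v * pairing n w (B i)))"
  and face_pairing_nonneg: "\<And>u i. u \<in> dual_monoid n V \<Longrightarrow> i < k \<Longrightarrow> 0 \<le> pairing n u (B i)"
  and N_large: "\<And>v i. v \<in> V \<Longrightarrow> i < n \<Longrightarrow>
      \<bar>pairing n (D i) v\<bar> + \<bar>\<Sum>j<n-k. chi i j * pairing n (D (k+j)) v\<bar> \<le> int N"
begin

abbreviation "m \<equiv> n - k"
abbreviation "S \<equiv> dual_monoid n V"

definition E :: "nat \<Rightarrow> nat \<Rightarrow> int" where
  "E i = (\<lambda>l. - D i l + (\<Sum>j<m. chi i j * D (k+j) l) + int N * L l)"
definition F :: "nat \<Rightarrow> nat \<Rightarrow> int" where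
  "F i = (\<lambda>l. - D i l + int N * L l)"
definition A :: "nat \<Rightarrow> nat \<Rightarrow> int" where
  "A i = (\<lambda>l. D i l + int N * L l)"
definition T :: "nat \<Rightarrow> nat \<Rightarrow> int" where
  "T j = (\<lambda>l. D (k+j) l + int N * L l)"
definition face_exp :: "(nat \<Rightarrow> int) \<Rightarrow> nat \<Rightarrow> nat" where
  "face_exp u = (\<lambda>i. if i < k then nat (pairing n u (B i)) else 0)"
definition left_exp :: "(nat \<Rightarrow> int) \<Rightarrow> (nat \<Rightarrow> nat) \<Rightarrow> nat \<Rightarrow> int" where
  "left_exp u r = (\<lambda>l. u l + (\<Sum>i<k. int (r i) * E i l))"
definition right_exp :: "(nat \<Rightarrow> int) \<Rightarrow> (nat \<Rightarrow> nat) \<Rightarrow> nat \<Rightarrow> int" where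
  "right_exp u r = (\<lambda>l. u l + (\<Sum>i<k. (pairing n u (B i) - int (r i)) * F i l))"
definition torus_weight :: "nat \<Rightarrow> int" where
  "torus_weight j = pairing n L (B (k+j))"
(* Chosen so that torus_exp j (E i) = chi i j and torus_exp j (F i) = 0. *)
definition torus_exp :: "nat \<Rightarrow> (nat \<Rightarrow> int) \<Rightarrow> int" where
  "torus_exp j u = pairing n u (B (k+j)) + int N * torus_weight j * (\<Sum>i<k. pairing n u (B i))"

lemma E_lat: "i < n \<Longrightarrow> E i \<in> lat n"
  unfolding E_def using D_lat L_lat k_le_n
  by (intro lat_add lat_uminus lat_sum lat_scale) auto
lemma F_lat: "i < n \<Longrightarrow> F i \<in> lat n"
  unfolding F_def using D_lat L_lat
  by (intro lat_add lat_uminus lat_scale) auto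
lemma A_lat: "i < n \<Longrightarrow> A i \<in> lat n"
  unfolding A_def using D_lat L_lat
  by (intro lat_add lat_scale) auto
lemma T_lat: "j < m \<Longrightarrow> T j \<in> lat n"
  unfolding T_def using D_lat L_lat
  by (intro lat_add lat_scale) auto

lemma pairing_D_sum_B:
  assumes "J \<subseteq> {..<n}" "j < n" "finite J"
  shows "pairing n (\<lambda>l. \<Sum>i\<in>J. c i * D i l) (B j) = (if j \<in> J then c j else 0)"
proof -
  have "pairing n (\<lambda>l. \<Sum>i\<in>J. c i * D i l) (B j) = (\<Sum>i\<in>J. c i * (if i = j then 1 else 0))"
    using assms by (simp add: pairing_sum_left pairing_scale_left dual_basis subset_iff)
  also have "\<dots> = (if j \<in> J then c j else 0)"
    using assms(3) by (simp add: if_distrib sum.delta' cong: if_cong)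
  finally show ?thesis .
qed

lemma pairing_E_B: "i < k \<Longrightarrow> j < n \<Longrightarrow> pairing n (E i) (B j)
   = - (if i = j then 1 else 0) + (if k \<le> j then chi i (j - k) else 0) + int N * pairing n L (B j)"
proof -
  assume a: "i < k" "j < n"
  have s: "(\<lambda>l. \<Sum>j'<n-k. chi i j' * D (k+j') l) = (\<lambda>l. \<Sum>j'\<in>{k..<n}. chi i (j'-k) * D j' l)"
  proof
    fix l
    show "(\<Sum>j'<n-k. chi i j' * D (k+j') l) = (\<Sum>j'\<in>{k..<n}. chi i (j'-k) * D j' l)"
      using k_le_n by (intro sum.reindex_bij_witness[where i="\<lambda>j. j - k" and j="\<lambda>j. k + j"]) auto
  qed
  have "pairing n (\<lambda>l. \<Sum>j'\<in>{k..<n}. chi i (j'-k) * D j' l) (B j) = (if j \<in> {k..<n} then chi i (j-k) else 0)"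
    using a by (intro pairing_D_sum_B) auto
  then show ?thesis using a k_le_n
    unfolding E_def pairing_add_left pairing_uminus_left pairing_scale_left s
      by (simp add: dual_basis)
qed

lemma pairing_F_B:
  "i < k \<Longrightarrow> j < n \<Longrightarrow> pairing n (F i) (B j) = - (if i = j then 1 else 0) + int N * pairing n L (B j)"
  using k_le_n unfolding F_def pairing_add_left pairing_uminus_left pairing_scale_left
    by (simp add: dual_basis)

lemma pairing_A_B:
  "i < k \<Longrightarrow> j < n \<Longrightarrow> pairing n (A i) (B j) = (if i = j then 1 else 0) + int N * pairing n L (B j)"
  using k_le_n unfolding A_def pairing_add_left pairing_uminus_left pairing_scale_left
    by (simp add: dual_basis)

lemma pairing_T_B:
  "j' < m \<Longrightarrow> j < n \<Longrightarrow> pairing n (T j') (B j) = (if k + j' = j then 1 else 0) + int N * pairing n L (B j)"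
  using k_le_n unfolding T_def pairing_add_left pairing_uminus_left pairing_scale_left
    by (simp add: dual_basis)

lemma pairing_E_B_face: "i < k \<Longrightarrow> i' < k \<Longrightarrow> pairing n (E i) (B i') = - (if i = i' then 1 else 0)"
  using pairing_E_B[of i i'] L_face k_le_n by simp
lemma pairing_F_B_face: "i < k \<Longrightarrow> i' < k \<Longrightarrow> pairing n (F i) (B i') = - (if i = i' then 1 else 0)"
  using pairing_F_B[of i i'] L_face k_le_n by simp

lemma torus_exp_lincomb:
  "torus_exp j (\<lambda>l. u l + (\<Sum>i\<in>I. c i * W i l)) = torus_exp j u + (\<Sum>i\<in>I. c i * torus_exp j (W i))"
  unfolding torus_exp_def pairing_lincomb_left
  by (simp add: sum.distrib sum_distrib_left distrib_left algebra_simps sum.swap[of _ I])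

lemma torus_exp_E: "i < k \<Longrightarrow> j < m \<Longrightarrow> torus_exp j (E i) = chi i j"
proof -
  assume a: "i < k" "j < m"
  have "(\<Sum>i'<k. pairing n (E i) (B i')) = -1"
    using a by (simp add: pairing_E_B_face sum_negf sum.delta sum.delta' cong: if_cong)
  then show ?thesis using a pairing_E_B[of i "k+j"] unfolding torus_exp_def torus_weight_def by simp
qed

lemma torus_exp_F: "i < k \<Longrightarrow> j < m \<Longrightarrow> torus_exp j (F i) = 0"
proof -
  assume a: "i < k" "j < m"
  have "(\<Sum>i'<k. pairing n (F i) (B i')) = -1"
    using a by (simp add: pairing_F_B_face sum_negf sum.delta sum.delta' cong: if_cong)
  then show ?thesis using a pairing_F_B[of i "k+j"] unfolding torus_exp_def torus_weight_def by simp
qed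

lemma torus_exp_L: "j < m \<Longrightarrow> torus_exp j L = torus_weight j"
  unfolding torus_exp_def torus_weight_def by (simp add: L_face)

lemma torus_exp_A: "i < k \<Longrightarrow> j < m \<Longrightarrow> torus_exp j (A i) = 2 * int N * torus_weight j"
proof -
  assume a: "i < k" "j < m"
  have "(\<Sum>i'<k. pairing n (A i) (B i')) = 1"
    using a k_le_n by (simp add: pairing_A_B L_face sum.delta cong: if_cong)
  then show ?thesis using a pairing_A_B[of i "k+j"] unfolding torus_exp_def torus_weight_def by simp
qed

lemma torus_exp_T:
  "j' < m \<Longrightarrow> j < m \<Longrightarrow> torus_exp j (T j') = (if j' = j then 1 else 0) + int N * torus_weight j"
proof -
  assume a: "j' < m" "j < m"
  have "(\<Sum>i'<k. pairing n (T j') (B i')) = 0"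
    using a k_le_n by (simp add: pairing_T_B L_face)
  then show ?thesis using a pairing_T_B[of j' "k+j"] unfolding torus_exp_def torus_weight_def
    by simp
qed

lemma pairing_A_B_face: "i < k \<Longrightarrow> i' < k \<Longrightarrow> pairing n (A i) (B i') = (if i = i' then 1 else 0)"
  using pairing_A_B[of i i'] L_face k_le_n by simp
lemma pairing_T_B_face: "j < m \<Longrightarrow> i' < k \<Longrightarrow> pairing n (T j) (B i') = 0"
  using pairing_T_B[of j i'] L_face k_le_n by simp

lemma pairing_nonneg_off_face:
  assumes v: "v \<in> V" "1 \<le> pairing n L v"
  shows "i < k \<Longrightarrow> 0 \<le> pairing n (E i) v" and "i < k \<Longrightarrow> 0 \<le> pairing n (F i) v"
    and "i < k \<Longrightarrow> 0 \<le> pairing n (A i) v" and "j < m \<Longrightarrow> 0 \<le> pairing n (T j) v"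
proof -
  have NL: "int N \<le> int N * pairing n L v" using v(2) by (simp add: mult_le_cancel_left1)
  show "i < k \<Longrightarrow> 0 \<le> pairing n (E i) v"
    using N_large[OF v(1), of i] k_le_n NL unfolding E_def pairing_add_left pairing_uminus_left pairing_scale_left pairing_sum_left
    by (simp add: pairing_scale_left)
  show "i < k \<Longrightarrow> 0 \<le> pairing n (F i) v"
    using N_large[OF v(1), of i] k_le_n NL unfolding F_def pairing_add_left pairing_uminus_left pairing_scale_left
    by simp
  show "i < k \<Longrightarrow> 0 \<le> pairing n (A i) v"
    using N_large[OF v(1), of i] k_le_n NL unfolding A_def pairing_add_left pairing_uminus_left pairing_scale_left
    by simp
  show "j < m \<Longrightarrow> 0 \<le> pairing n (T j) v"
    using N_large[OF v(1), of "k+j"] k_le_n NL unfolding T_def pairing_add_left pairing_uminus_left pairing_scale_left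
    by (simp add: less_diff_conv add.commute)
qed

lemma S_memberI:
  assumes "w \<in> lat n" "\<And>v. v \<in> V \<Longrightarrow> 1 \<le> pairing n L v \<Longrightarrow> 0 \<le> pairing n w v"
    "\<And>i. i < k \<Longrightarrow> 0 \<le> pairing n w (B i)"
  shows "w \<in> S"
  unfolding dual_monoid_pairing
proof (intro CollectI conjI ballI)
  show "w \<in> lat n" by fact
  fix v assume v: "v \<in> V"
  show "0 \<le> pairing n w v"
  proof (cases "1 \<le> pairing n L v")
    case True then show ?thesis using assms(2) v by blast
  next
    case False
    then have "pairing n L v = 0" using L_nonneg[OF v] by simp
    then have "(\<forall>i<k. 0 \<le> pairing n (D i) v) \<and> pairing n w v = (\<Sum>i<k. pairing n (D i) v * pairing n w (B i))"
      using face_ray_coords[OF v] by blast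
    then show ?thesis using assms(3) by (auto intro!: sum_nonneg)
  qed
qed

lemma L_S: "L \<in> S"
  by (rule S_memberI) (auto simp: L_lat L_face)
lemma A_S: "i < k \<Longrightarrow> A i \<in> S"
  using k_le_n by (intro S_memberI) (auto simp: A_lat pairing_nonneg_off_face pairing_A_B_face)
lemma T_S: "j < m \<Longrightarrow> T j \<in> S"
  using k_le_n by (intro S_memberI) (auto simp: T_lat pairing_nonneg_off_face pairing_T_B_face)

lemma pairing_left_exp:
  "pairing n (left_exp u r) w = pairing n u w + (\<Sum>i<k. int (r i) * pairing n (E i) w)"
  unfolding left_exp_def by (rule pairing_lincomb_left)
lemma pairing_right_exp:
  "pairing n (right_exp u r) w = pairing n u w + (\<Sum>i<k. (pairing n u (B i) - int (r i)) * pairing n (F i) w)"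
  unfolding right_exp_def by (rule pairing_lincomb_left)

lemma pairing_left_exp_B:
  "i' < k \<Longrightarrow> pairing n (left_exp u r) (B i') = pairing n u (B i') - int (r i')"
  by (simp add: pairing_left_exp pairing_E_B_face if_distrib sum_negf cong: if_cong) 
lemma pairing_right_exp_B: "i' < k \<Longrightarrow> pairing n (right_exp u r) (B i') = int (r i')"
  by (simp add: pairing_right_exp pairing_F_B_face if_distrib sum_negf cong: if_cong) 

lemma multi_index_le_pairing:
  "u \<in> S \<Longrightarrow> r \<in> multi_indices k (face_exp u) \<Longrightarrow> i < k \<Longrightarrow> int (r i) \<le> pairing n u (B i)"
  using multi_indicesD(1)[of r k "face_exp u" i] face_pairing_nonneg[of u i]
    by (simp add: face_exp_def)

lemma left_exp_in_S: "u \<in> S \<Longrightarrow> r \<in> multi_indices k (face_exp u) \<Longrightarrow> left_exp u r \<in> S"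
proof (rule S_memberI)
  assume u: "u \<in> S" and r: "r \<in> multi_indices k (face_exp u)"
  show "left_exp u r \<in> lat n" unfolding left_exp_def using dual_monoid_lat[OF u] E_lat k_le_n
    by (intro lat_add lat_sum lat_scale) auto
  fix v assume "v \<in> V" "1 \<le> pairing n L v"
  then show "0 \<le> pairing n (left_exp u r) v" using u unfolding pairing_left_exp dual_monoid_pairing
    by (auto intro!: add_nonneg_nonneg sum_nonneg pairing_nonneg_off_face mult_nonneg_nonneg)
next
  fix i assume "u \<in> S" "r \<in> multi_indices k (face_exp u)" "i < k"
  then show "0 \<le> pairing n (left_exp u r) (B i)" using multi_index_le_pairing
    by (simp add: pairing_left_exp_B)
qed

lemma right_exp_in_S: "u \<in> S \<Longrightarrow> r \<in> multi_indices k (face_exp u) \<Longrightarrow> right_exp u r \<in> S"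
proof (rule S_memberI)
  assume u: "u \<in> S" and r: "r \<in> multi_indices k (face_exp u)"
  show "right_exp u r \<in> lat n" unfolding right_exp_def using dual_monoid_lat[OF u] F_lat k_le_n
    by (intro lat_add lat_sum lat_scale) auto
  fix v assume "v \<in> V" "1 \<le> pairing n L v"
  then show "0 \<le> pairing n (right_exp u r) v" using u r multi_index_le_pairing unfolding pairing_right_exp dual_monoid_pairing
    by (auto intro!: add_nonneg_nonneg sum_nonneg pairing_nonneg_off_face mult_nonneg_nonneg)
next
  fix i assume "u \<in> S" "r \<in> multi_indices k (face_exp u)" "i < k"
  then show "0 \<le> pairing n (right_exp u r) (B i)" by (simp add: pairing_right_exp_B)
qed

lemma face_exp_left_exp:
  "u \<in> S \<Longrightarrow> r \<in> multi_indices k (face_exp u) \<Longrightarrow> face_exp (left_exp u r) = (\<lambda>i. face_exp u i - r i)"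
proof
  fix i assume "u \<in> S" "r \<in> multi_indices k (face_exp u)"
  then show "face_exp (left_exp u r) i = face_exp u i - r i"
    using multi_index_le_pairing[of u r i] multi_indicesD(2)[of r k "face_exp u" i]
      by (auto simp: face_exp_def pairing_left_exp_B nat_diff_distrib)
qed

lemma face_exp_right_exp: "r \<in> multi_indices k P \<Longrightarrow> face_exp (right_exp u r) = r"
proof
  fix i assume "r \<in> multi_indices k P"
  then show "face_exp (right_exp u r) i = r i"
    using multi_indicesD(2)[of r k P i] by (auto simp: face_exp_def pairing_right_exp_B)
qed

lemma torus_exp_left_exp:
  "j < m \<Longrightarrow> torus_exp j (left_exp u r) = torus_exp j u + (\<Sum>i<k. int (r i) * chi i j)"
  unfolding left_exp_def torus_exp_lincomb by (simp add: torus_exp_E)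
lemma torus_exp_right_exp: "j < m \<Longrightarrow> torus_exp j (right_exp u r) = torus_exp j u"
  unfolding right_exp_def torus_exp_lincomb by (simp add: torus_exp_F)

lemma face_exp_add: "a \<in> S \<Longrightarrow> b \<in> S \<Longrightarrow> face_exp (\<lambda>l. a l + b l) = (\<lambda>i. face_exp a i + face_exp b i)"
  using face_pairing_nonneg by (auto simp: face_exp_def pairing_add_left nat_add_distrib)

lemma left_exp_add:
  "left_exp (\<lambda>l. a l + b l) (\<lambda>i. r i + r' i) = (\<lambda>l. left_exp a r l + left_exp b r' l)"
  by (simp add: left_exp_def distrib_right sum.distrib algebra_simps)
lemma right_exp_add:
  "right_exp (\<lambda>l. a l + b l) (\<lambda>i. r i + r' i) = (\<lambda>l. right_exp a r l + right_exp b r' l)"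
  by (simp add: right_exp_def pairing_add_left distrib_right sum.distrib algebra_simps sum_subtractf)

lemma face_exp_zero: "face_exp (\<lambda>_. 0) = (\<lambda>_. 0)"
proof
  fix i show "face_exp (\<lambda>_. 0) i = 0" unfolding face_exp_def pairing_def by simp
qed

lemma left_exp_zero: "left_exp u (\<lambda>_. 0) = u"
  by (simp add: left_exp_def)
lemma right_exp_zero: "right_exp (\<lambda>_. 0) (\<lambda>_. 0) = (\<lambda>_. 0)"
  by (simp add: right_exp_def pairing_def)

section \<open>The monoid structure\<close>

(* Read off from the binomial expansion of (a_i + chi_i(t) a'_i)^(p_i) in the group law. *)
definition mu :: "((nat \<Rightarrow> int) \<Rightarrow> 'K::field) \<Rightarrow> ((nat \<Rightarrow> int) \<Rightarrow> 'K) \<Rightarrow> ((nat \<Rightarrow> int) \<Rightarrow> 'K)" where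
  "mu x y = (\<lambda>u. if u \<in> S
     then (\<Sum>r\<in>multi_indices k (face_exp u).
             of_nat (multi_choose k (face_exp u) r) * x (left_exp u r) * y (right_exp u r))
     else 0)"

lemma mu_in_toric_pts:
  assumes x: "x \<in> toric_pts S" and y: "y \<in> toric_pts S"
  shows "mu x y \<in> toric_pts S"
  unfolding toric_pts_def
proof (intro CollectI conjI ballI allI impI)
  show "mu x y (\<lambda>_. 0) = 1"
    using dual_monoid_zero toric_pts_zero[OF x] toric_pts_zero[OF y]
    by (simp add: mu_def face_exp_zero multi_indices_zero_bound multi_choose_def left_exp_zero right_exp_zero)
  fix u assume "u \<notin> S" then show "mu x y u = 0" by (simp add: mu_def)
next
  fix a b assume a: "a \<in> S" and b: "b \<in> S"
  let ?p = "face_exp a" and ?q = "face_exp b"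
  let ?G = "\<lambda>s. x (left_exp (\<lambda>l. a l + b l) s) * y (right_exp (\<lambda>l. a l + b l) s)"
  have "mu x y (\<lambda>i. a i + b i) = (\<Sum>s\<in>multi_indices k (\<lambda>i. ?p i + ?q i).
      of_nat (multi_choose k (\<lambda>i. ?p i + ?q i) s) * ?G s)"
    using dual_monoid_add[OF a b] by (simp add: mu_def face_exp_add[OF a b] mult.assoc)
  also have "\<dots> = (\<Sum>r\<in>multi_indices k ?p. \<Sum>r'\<in>multi_indices k ?q.
      of_nat (multi_choose k ?p r) * of_nat (multi_choose k ?q r') * ?G (\<lambda>i. r i + r' i))"
    by (rule multi_vandermonde)
  also have "\<dots> = (\<Sum>r\<in>multi_indices k ?p. \<Sum>r'\<in>multi_indices k ?q.
      (of_nat (multi_choose k ?p r) * x (left_exp a r) * y (right_exp a r)) *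
      (of_nat (multi_choose k ?q r') * x (left_exp b r') * y (right_exp b r')))"
    by (intro sum.cong refl) (simp add: left_exp_add right_exp_add toric_pts_add[OF x]
        toric_pts_add[OF y] left_exp_in_S right_exp_in_S a b mult_ac)
  also have "\<dots> = mu x y a * mu x y b"
    using a b by (simp add: mu_def sum_product)
  finally show "mu x y (\<lambda>i. a i + b i) = mu x y a * mu x y b" .
qed

lemma left_exp_left_exp: "left_exp (left_exp u r) s = left_exp u (\<lambda>i. r i + s i)"
  by (simp add: left_exp_def distrib_right sum.distrib algebra_simps)

lemma left_exp_right_exp: "left_exp (right_exp u (\<lambda>i. r i + s i)) r = right_exp (left_exp u r) s"
proof
  fix l
  have "(\<Sum>i<k. (pairing n (left_exp u r) (B i) - int (s i)) * F i l) = (\<Sum>i<k. (pairing n u (B i) - int (r i + s i)) * F i l)"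
    by (intro sum.cong refl) (simp add: pairing_left_exp_B algebra_simps)
  then show "left_exp (right_exp u (\<lambda>i. r i + s i)) r l = right_exp (left_exp u r) s l"
    unfolding left_exp_def right_exp_def by simp
qed

lemma right_exp_right_exp: "right_exp (right_exp u (\<lambda>i. r i + s i)) r = right_exp u r"
proof
  fix l
  have "(\<Sum>i<k. (pairing n u (B i) - int (r i + s i)) * F i l) + (\<Sum>i<k. (pairing n (right_exp u (\<lambda>i. r i + s i)) (B i) - int (r i)) * F i l)
      = (\<Sum>i<k. (pairing n u (B i) - int (r i)) * F i l)"
    by (simp add: pairing_right_exp_B sum.distrib[symmetric] algebra_simps)
  then show "right_exp (right_exp u (\<lambda>i. r i + s i)) r l = right_exp u r l"
    unfolding right_exp_def by (simp add: add.assoc)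
qed

lemma mu_assoc:
  assumes x: "x \<in> toric_pts S" and y: "y \<in> toric_pts S" and z: "z \<in> toric_pts S"
  shows "mu (mu x y) z = mu x (mu y z)"
proof
  fix u
  show "mu (mu x y) z u = mu x (mu y z) u"
  proof (cases "u \<in> S")
    case False then show ?thesis by (simp add: mu_def)
  next
    case u: True
    let ?p = "face_exp u"
    define J where "J r' s' = x (left_exp u r') * y (left_exp (right_exp u r') s') * z (right_exp (right_exp u r') s')"
      for r' s'
    have right: "mu y z (right_exp u r') = (\<Sum>s'\<in>multi_indices k r'.
        of_nat (multi_choose k r' s') * y (left_exp (right_exp u r') s') * z (right_exp (right_exp u r') s'))"
      if "r' \<in> multi_indices k ?p" for r'
      using right_exp_in_S[OF u that] face_exp_right_exp[OF that] by (simp add: mu_def)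
    have left: "mu x y (left_exp u r) = (\<Sum>s\<in>multi_indices k (\<lambda>i. ?p i - r i).
        of_nat (multi_choose k (\<lambda>i. ?p i - r i) s) * x (left_exp u (\<lambda>i. r i + s i)) * y (right_exp (left_exp u r) s))"
      if "r \<in> multi_indices k ?p" for r
      using left_exp_in_S[OF u that] face_exp_left_exp[OF u that]
        by (simp add: mu_def left_exp_left_exp)
    have "mu x (mu y z) u = (\<Sum>r'\<in>multi_indices k ?p. of_nat (multi_choose k ?p r') * x (left_exp u r') *
        (\<Sum>s'\<in>multi_indices k r'. of_nat (multi_choose k r' s') * y (left_exp (right_exp u r') s') *
           z (right_exp (right_exp u r') s')))"
      using u right by (simp add: mu_def)
    also have "\<dots> = (\<Sum>r'\<in>multi_indices k ?p. \<Sum>s'\<in>multi_indices k r'.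
        of_nat (multi_choose k ?p r') * of_nat (multi_choose k r' s') * J r' s')"
      by (simp add: J_def sum_distrib_left mult_ac)
    also have "\<dots> = (\<Sum>r\<in>multi_indices k ?p. \<Sum>s\<in>multi_indices k (\<lambda>i. ?p i - r i).
        of_nat (multi_choose k ?p r) * of_nat (multi_choose k (\<lambda>i. ?p i - r i) s) * J (\<lambda>i. r i + s i) r)"
      by (rule multi_choose_coassoc)
    also have "\<dots> = (\<Sum>r\<in>multi_indices k ?p. of_nat (multi_choose k ?p r) *
        (\<Sum>s\<in>multi_indices k (\<lambda>i. ?p i - r i). of_nat (multi_choose k (\<lambda>i. ?p i - r i) s) *
           x (left_exp u (\<lambda>i. r i + s i)) * y (right_exp (left_exp u r) s)) * z (right_exp u r))"
      by (simp add: J_def left_exp_right_exp right_exp_right_exp sum_distrib_left sum_distrib_right mult_ac)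
    also have "\<dots> = mu (mu x y) z u"
      using u left by (simp add: mu_def)
    finally show ?thesis by simp
  qed
qed

definition e :: "(nat \<Rightarrow> int) \<Rightarrow> 'K::field" where
  "e u = (if u \<in> S \<and> (\<forall>i<k. pairing n u (B i) = 0) then 1 else 0)"

lemma e_in_toric_pts: "e \<in> toric_pts S"
  unfolding toric_pts_def
proof (intro CollectI conjI ballI allI impI)
  show "e (\<lambda>_. 0) = 1" using dual_monoid_zero by (simp add: e_def pairing_def)
  fix u assume "u \<notin> S" then show "e u = 0" by (simp add: e_def)
next
  fix a b assume a: "a \<in> S" and b: "b \<in> S"
  have "(\<forall>i<k. pairing n (\<lambda>l. a l + b l) (B i) = 0) \<longleftrightarrow> (\<forall>i<k. pairing n a (B i) = 0) \<and> (\<forall>i<k. pairing n b (B i) = 0)"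
    using face_pairing_nonneg[OF a] face_pairing_nonneg[OF b]
      by (auto simp: pairing_add_left add_nonneg_eq_0_iff)
  then show "e (\<lambda>i. a i + b i) = e a * e b"
    using dual_monoid_add[OF a b] a b by (simp add: e_def)
qed

lemma face_exp_in_multi_indices: "face_exp u \<in> multi_indices k (face_exp u)"
  by (simp add: multi_indices_def face_exp_def)

lemma e_left_exp:
  "u \<in> S \<Longrightarrow> r \<in> multi_indices k (face_exp u) \<Longrightarrow> e (left_exp u r) = (if r = face_exp u then 1 else 0)"
proof -
  assume u: "u \<in> S" and r: "r \<in> multi_indices k (face_exp u)"
  have "(\<forall>i<k. pairing n (left_exp u r) (B i) = 0) \<longleftrightarrow> r = face_exp u"
  proof
    assume h: "\<forall>i<k. pairing n (left_exp u r) (B i) = 0"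
    show "r = face_exp u"
    proof
      fix i show "r i = face_exp u i"
        using h r multi_indicesD(2)[OF r, of i]
          by (cases "i < k") (auto simp: pairing_left_exp_B face_exp_def)
    qed
  next
    assume "r = face_exp u"
    then show "\<forall>i<k. pairing n (left_exp u r) (B i) = 0" using face_pairing_nonneg[OF u]
      by (simp add: pairing_left_exp_B face_exp_def)
  qed
  then show ?thesis using left_exp_in_S[OF u r] by (simp add: e_def)
qed

lemma e_right_exp:
  "r \<in> multi_indices k P \<Longrightarrow> e (right_exp u r) = (if right_exp u r \<in> S then (if r = (\<lambda>_. 0) then 1 else 0) else 0)"
proof -
  assume r: "r \<in> multi_indices k P"
  have "(\<forall>i<k. pairing n (right_exp u r) (B i) = 0) \<longleftrightarrow> r = (\<lambda>_. 0)"
  proof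
    assume h: "\<forall>i<k. pairing n (right_exp u r) (B i) = 0"
    show "r = (\<lambda>_. 0)"
    proof
      fix i show "r i = 0"
        using h multi_indicesD(2)[OF r, of i] by (cases "i < k") (auto simp: pairing_right_exp_B)
    qed
  qed (simp add: pairing_right_exp_B)
  then show ?thesis by (simp add: e_def)
qed

lemma right_exp_face_exp: "u \<in> S \<Longrightarrow> right_exp u (face_exp u) = u"
  using face_pairing_nonneg by (simp add: right_exp_def face_exp_def)

lemma mu_e_left: "x \<in> toric_pts S \<Longrightarrow> mu e x = x"
proof
  fix u assume x: "x \<in> toric_pts S"
  show "mu e x u = x u"
  proof (cases "u \<in> S")
    case False then show ?thesis using toric_pts_outside[OF x] by (simp add: mu_def)
  next
    case u: True
    have "mu e x u = (\<Sum>r\<in>multi_indices k (face_exp u). if r = face_exp u then of_nat (multi_choose k (face_exp u) r) * x (right_exp u r) else 0)"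
      using u
        by (simp add: mu_def e_left_exp if_distrib[of "\<lambda>t. of_nat _ * t * _"] cong: sum.cong if_cong)
    also have "\<dots> = x u"
      using u
        by (simp add: sum.delta' finite_multi_indices face_exp_in_multi_indices multi_choose_self right_exp_face_exp)
    finally show ?thesis .
  qed
qed

lemma mu_e_right: "x \<in> toric_pts S \<Longrightarrow> mu x e = x"
proof
  fix u assume x: "x \<in> toric_pts S"
  show "mu x e u = x u"
  proof (cases "u \<in> S")
    case False then show ?thesis using toric_pts_outside[OF x] by (simp add: mu_def)
  next
    case u: True
    have "mu x e u = (\<Sum>r\<in>multi_indices k (face_exp u). if r = (\<lambda>_. 0) then of_nat (multi_choose k (face_exp u) r) * x (left_exp u r) else 0)"
      using u right_exp_in_S
        by (simp add: mu_def e_right_exp if_distrib[of "\<lambda>t. _ * t"] cong: sum.cong if_cong)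
    also have "\<dots> = x u"
      using u
        by (simp add: sum.delta' finite_multi_indices zero_in_multi_indices multi_choose_zero left_exp_zero)
    finally show ?thesis .
  qed
qed

lemma torus_exp_add: "torus_exp j (\<lambda>l. a l + b l) = torus_exp j a + torus_exp j b"
  unfolding torus_exp_def by (simp add: pairing_add_left sum.distrib algebra_simps)
lemma torus_exp_zero: "torus_exp j (\<lambda>_. 0) = 0"
  unfolding torus_exp_def pairing_def by simp

section \<open>The unit group\<close>

definition gchi_embed :: "(nat \<Rightarrow> 'K::field) \<times> (nat \<Rightarrow> 'K) \<Rightarrow> (nat \<Rightarrow> int) \<Rightarrow> 'K" where
  "gchi_embed g = (\<lambda>u. if u \<in> S then (\<Prod>i<k. fst g i ^ face_exp u i) * (\<Prod>j<m. snd g j powi torus_exp j u) else 0)"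

lemma gchi_embed_in_toric_pts:
  assumes g: "g \<in> gchi_pts k m"
  shows "gchi_embed g \<in> toric_pts S"
  unfolding toric_pts_def
proof (intro CollectI conjI ballI allI impI)
  show "gchi_embed g (\<lambda>_. 0) = 1" using dual_monoid_zero
    by (simp add: gchi_embed_def face_exp_zero torus_exp_zero)
  fix u assume "u \<notin> S" then show "gchi_embed g u = 0" by (simp add: gchi_embed_def)
next
  fix a b assume a: "a \<in> S" and b: "b \<in> S"
  have "(\<Prod>j<m. snd g j powi torus_exp j (\<lambda>l. a l + b l)) = (\<Prod>j<m. snd g j powi torus_exp j a) * (\<Prod>j<m. snd g j powi torus_exp j b)"
    unfolding prod.distrib[symmetric]
    by (intro prod.cong refl) (simp add: torus_exp_add power_int_add gchi_ptsD[OF g])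
  then show "gchi_embed g (\<lambda>i. a i + b i) = gchi_embed g a * gchi_embed g b"
    using a b dual_monoid_add[OF a b]
      by (simp add: gchi_embed_def face_exp_add power_add prod.distrib mult_ac)
qed

lemma gchi_embed_binomial_term:
  assumes g: "g \<in> gchi_pts k m" and h: "h \<in> gchi_pts k m"
    and u: "u \<in> S" and r: "r \<in> multi_indices k (face_exp u)"
  shows "(\<Prod>i<k. fst g i ^ (face_exp u i - r i) * (chr m (chi i) (snd g) * fst h i) ^ r i)
           * (\<Prod>j<m. (snd g j * snd h j) powi torus_exp j u)
         = gchi_embed g (left_exp u r) * gchi_embed h (right_exp u r)"
proof -
  obtain a t where g_eq: "g = (a, t)" by (cases g)
  obtain a' t' where h_eq: "h = (a', t')" by (cases h)
  have t: "\<And>j. j < m \<Longrightarrow> t j \<noteq> 0" using gchi_ptsD[OF g] g_eq by auto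
  let ?p = "face_exp u" and ?c = "\<Prod>j<m. t j powi (\<Sum>i<k. int (r i) * chi i j)"
  have a_part: "(\<Prod>i<k. a i ^ (?p i - r i) * (chr m (chi i) t * a' i) ^ r i)
      = (\<Prod>i<k. a i ^ (?p i - r i)) * (\<Prod>i<k. a' i ^ r i) * ?c"
    by (simp add: power_mult_distrib prod.distrib prod_chr_power[OF t] mult_ac)
  have t_part: "(\<Prod>j<m. (t j * t' j) powi torus_exp j u) * ?c
      = (\<Prod>j<m. t j powi torus_exp j (left_exp u r)) * (\<Prod>j<m. t' j powi torus_exp j (right_exp u r))"
    unfolding prod.distrib[symmetric]
    by (intro prod.cong refl)
      (simp add: torus_exp_left_exp torus_exp_right_exp power_int_mult_distrib power_int_add t mult_ac)
  let ?A = "\<Prod>i<k. a i ^ (?p i - r i)" and ?A' = "\<Prod>i<k. a' i ^ r i"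
    and ?T = "\<Prod>j<m. t j powi torus_exp j (left_exp u r)"
    and ?T' = "\<Prod>j<m. t' j powi torus_exp j (right_exp u r)"
  have "(\<Prod>i<k. a i ^ (?p i - r i) * (chr m (chi i) t * a' i) ^ r i) * (\<Prod>j<m. (t j * t' j) powi torus_exp j u)
      = ?A * ?A' * ((\<Prod>j<m. (t j * t' j) powi torus_exp j u) * ?c)"
    unfolding a_part by (simp only: mult_ac)
  also have "\<dots> = (?A * ?T) * (?A' * ?T')"
    unfolding t_part by (simp only: mult_ac)
  also have "\<dots> = gchi_embed g (left_exp u r) * gchi_embed h (right_exp u r)"
    using left_exp_in_S[OF u r] right_exp_in_S[OF u r]
    by (simp add: gchi_embed_def g_eq h_eq face_exp_left_exp[OF u r] face_exp_right_exp[OF r])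
  finally show ?thesis by (simp add: g_eq h_eq)
qed

lemma gchi_embed_mult:
  assumes g: "g \<in> gchi_pts k m" and h: "h \<in> gchi_pts k m"
  shows "gchi_embed (gchi_mult k m chi g h) = mu (gchi_embed g) (gchi_embed h)"
proof
  fix u
  show "gchi_embed (gchi_mult k m chi g h) u = mu (gchi_embed g) (gchi_embed h) u"
  proof (cases "u \<in> S")
    case False then show ?thesis by (simp add: gchi_embed_def mu_def)
  next
    case u: True
    let ?p = "face_exp u"
    have "gchi_embed (gchi_mult k m chi g h) u
        = (\<Prod>i<k. (fst g i + chr m (chi i) (snd g) * fst h i) ^ ?p i)
          * (\<Prod>j<m. (snd g j * snd h j) powi torus_exp j u)"
      using u by (simp add: gchi_embed_def gchi_mult_def split: prod.split)
    also have "\<dots> = (\<Sum>r\<in>multi_indices k ?p. of_nat (multi_choose k ?p r)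
          * ((\<Prod>i<k. fst g i ^ (?p i - r i) * (chr m (chi i) (snd g) * fst h i) ^ r i)
             * (\<Prod>j<m. (snd g j * snd h j) powi torus_exp j u)))"
      by (simp add: prod_binomial_multi_indices sum_distrib_right mult.assoc)
    also have "\<dots> = mu (gchi_embed g) (gchi_embed h) u"
      using u by (simp add: mu_def gchi_embed_binomial_term[OF g h u] mult.assoc)
    finally show ?thesis .
  qed
qed

lemma face_exp_L: "face_exp L = (\<lambda>_. 0)"
  by (auto simp: face_exp_def L_face)
lemma face_exp_T: "j < m \<Longrightarrow> face_exp (T j) = (\<lambda>_. 0)"
  by (auto simp: face_exp_def pairing_T_B_face)
lemma face_exp_A: "i < k \<Longrightarrow> face_exp (A i) = (\<lambda>i'. if i' = i then 1 else 0)"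
  by (auto simp: face_exp_def pairing_A_B_face)

lemma sum_face_pairing: "u \<in> S \<Longrightarrow> (\<Sum>i<k. pairing n u (B i)) = int (\<Sum>i<k. face_exp u i)"
  using face_pairing_nonneg by (simp add: face_exp_def)

definition L_value :: "(nat \<Rightarrow> 'K::field) \<Rightarrow> 'K" where
  "L_value t = (\<Prod>j<m. t j powi torus_weight j)"

lemma L_value_nonzero: assumes g: "g \<in> gchi_pts k m" shows "L_value (snd g) \<noteq> 0"
  using gchi_ptsD[OF g] by (simp add: L_value_def)

lemma prod_power_int_torus_weight:
  "(\<Prod>j<m. (t j :: 'K::field) powi (int c * torus_weight j)) = L_value t ^ c"
  by (simp add: L_value_def prod_power_distrib power_int_power' mult.commute)

lemma gchi_embed_L: "gchi_embed g L = L_value (snd g)"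
  using L_S by (simp add: gchi_embed_def face_exp_L torus_exp_L L_value_def)

lemma gchi_embed_T:
  assumes g: "g \<in> gchi_pts k m" and j: "j < m"
  shows "gchi_embed g (T j) = snd g j * L_value (snd g) ^ N"
proof -
  have "(\<Prod>j'<m. snd g j' powi torus_exp j' (T j)) = (\<Prod>j'<m. snd g j' powi (if j = j' then 1 else 0) * snd g j' powi (int N * torus_weight j'))"
    using j gchi_ptsD[OF g] by (intro prod.cong refl) (simp add: torus_exp_T power_int_add)
  also have "\<dots> = snd g j * L_value (snd g) ^ N"
    using j
      by (simp add: prod.distrib prod_power_int_torus_weight if_distrib[of "\<lambda>e. _ powi e"] prod.delta cong: if_cong)
  finally show ?thesis using T_S[OF j] by (simp add: gchi_embed_def face_exp_T[OF j])
qed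

lemma gchi_embed_A:
  assumes g: "g \<in> gchi_pts k m" and i: "i < k"
  shows "gchi_embed g (A i) = fst g i * L_value (snd g) ^ (2 * N)"
proof -
  have "(\<Prod>j<m. snd g j powi torus_exp j (A i)) = (\<Prod>j<m. snd g j powi (int (2 * N) * torus_weight j))"
    using i by (intro prod.cong refl) (simp add: torus_exp_A)
  also have "\<dots> = L_value (snd g) ^ (2 * N)" by (rule prod_power_int_torus_weight)
  finally have torus_part: "(\<Prod>j<m. snd g j powi torus_exp j (A i)) = L_value (snd g) ^ (2 * N)" .
  have face_part: "(\<Prod>i'<k. fst g i' ^ (if i' = i then 1 else 0)) = fst g i"
    using i by (simp add: if_distrib[of "\<lambda>e. _ ^ e"] prod.delta cong: if_cong)
  show ?thesis using A_S[OF i] by (simp add: gchi_embed_def face_exp_A[OF i] torus_part face_part)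
qed

lemma gchi_embed_one: "gchi_embed (gchi_one m) = e"
proof
  fix u show "gchi_embed (gchi_one m) u = e u"
  proof (cases "u \<in> S")
    case False then show ?thesis by (simp add: gchi_embed_def e_def)
  next
    case True
    have "\<forall>i<k. (face_exp u i = 0) = (pairing n u (B i) = 0)"
    proof (intro allI impI)
      fix i assume "i < k"
      then show "(face_exp u i = 0) = (pairing n u (B i) = 0)" using face_pairing_nonneg[OF True \<open>i < k\<close>]
        by (auto simp: face_exp_def)
    qed
    then have "(\<forall>i<k. face_exp u i = 0) \<longleftrightarrow> (\<forall>i<k. pairing n u (B i) = 0)" by blast
    then show ?thesis using True by (simp add: gchi_embed_def e_def gchi_one_def prod_zero_power)
  qed
qed

lemma mu_face_exp_zero:
  assumes "w \<in> S" "face_exp w = (\<lambda>_. 0)"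
  shows "mu x y w = x w * y w"
  using assms right_exp_face_exp[OF assms(1)]
    by (simp add: mu_def multi_indices_zero_bound multi_choose_def left_exp_zero)

lemma e_face_exp_zero:
  assumes w: "w \<in> S" "face_exp w = (\<lambda>_. 0)"
  shows "e w = 1"
proof -
  have "pairing n w (B i) = 0" if "i < k" for i
    using fun_cong[OF w(2), of i] face_pairing_nonneg[OF w(1) that] that by (simp add: face_exp_def)
  then show ?thesis using w(1) by (simp add: e_def)
qed

lemma unit_nonzero_off_face:
  assumes x: "x \<in> monoid_units S mu e" and w: "w \<in> S" "face_exp w = (\<lambda>_. 0)"
  shows "x w \<noteq> 0"
proof -
  obtain y where "mu x y = e" using x by (auto simp: monoid_units_def)
  then have "x w * y w = 1" using mu_face_exp_zero[OF w] e_face_exp_zero[OF w] by metis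
  then show ?thesis by auto
qed

lemma gchi_embed_in_units:
  assumes g: "g \<in> gchi_pts k m"
  shows "gchi_embed g \<in> monoid_units S mu e"
proof -
  have right: "mu (gchi_embed g) (gchi_embed (gchi_inv k m chi g)) = e"
    using gchi_embed_mult[OF g gchi_inv_in_gchi_pts[OF g]] gchi_mult_inv_right[OF g] gchi_embed_one
      by metis
  have left: "mu (gchi_embed (gchi_inv k m chi g)) (gchi_embed g) = e"
    using gchi_embed_mult[OF gchi_inv_in_gchi_pts[OF g] g] gchi_mult_inv_left[OF g] gchi_embed_one
      by metis
  show ?thesis unfolding monoid_units_def
    using gchi_embed_in_toric_pts[OF g] gchi_embed_in_toric_pts[OF gchi_inv_in_gchi_pts[OF g]] left right
      by blast
qed

lemma expand_dual_basis_split: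
  "u \<in> lat n \<Longrightarrow> u l = (\<Sum>i<k. pairing n u (B i) * D i l) + (\<Sum>j<m. pairing n u (B (k+j)) * D (k+j) l)"
  using fun_cong[OF expand_dual_basis[of u], of l] sum_lessThan_split[OF k_le_n] by simp

definition torus_pairing :: "(nat \<Rightarrow> int) \<Rightarrow> nat \<Rightarrow> int" where
  "torus_pairing u j = pairing n u (B (k+j))"

(* Expanding u in the dual basis and trading D_i, D_(k+j) for A_i, T_j, which differ from them by
   N L, yields an identity between elements of S. *)
lemma character_relation:
  assumes x: "x \<in> toric_pts S" and u: "u \<in> S"
  shows "x u * (\<Prod>j<m. x (T j) ^ nat (- torus_pairing u j))
           * x L ^ (N * ((\<Sum>i<k. face_exp u i) + (\<Sum>j<m. nat (torus_pairing u j))))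
         = (\<Prod>i<k. x (A i) ^ face_exp u i) * (\<Prod>j<m. x (T j) ^ nat (torus_pairing u j))
           * x L ^ (N * (\<Sum>j<m. nat (- torus_pairing u j)))"
proof -
  define qp where "qp j = nat (torus_pairing u j)" for j
  define qm where "qm j = nat (- torus_pairing u j)" for j
  define T_neg where "T_neg = (\<lambda>l. \<Sum>j<m. int (qm j) * T j l)"
  define L_left where "L_left = (\<lambda>l. int (N * ((\<Sum>i<k. face_exp u i) + (\<Sum>j<m. qp j))) * L l)"
  define A_pos where "A_pos = (\<lambda>l. \<Sum>i<k. int (face_exp u i) * A i l)"
  define T_pos where "T_pos = (\<lambda>l. \<Sum>j<m. int (qp j) * T j l)"
  define L_right where "L_right = (\<lambda>l. int (N * (\<Sum>j<m. qm j)) * L l)"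
  have u_lat: "u \<in> lat n" using dual_monoid_lat[OF u] .
  have face_pairing: "i < k \<Longrightarrow> pairing n u (B i) = int (face_exp u i)" for i using face_pairing_nonneg[OF u]
    by (simp add: face_exp_def)
  have torus_pairing_split: "torus_pairing u j = int (qp j) - int (qm j)" for j by (simp add: qp_def qm_def)
  have lattice_identity: "(\<lambda>l. u l + (T_neg l + L_left l)) = (\<lambda>l. A_pos l + T_pos l + L_right l)"
  proof
    fix l
    have u_expansion: "u l = (\<Sum>i<k. int (face_exp u i) * D i l) + (\<Sum>j<m. int (qp j) * D (k+j) l) - (\<Sum>j<m. int (qm j) * D (k+j) l)"
      unfolding expand_dual_basis_split[OF u_lat, of l] torus_pairing_def[symmetric] torus_pairing_split
      by (simp add: face_pairing left_diff_distrib sum_subtractf)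
    show "u l + (T_neg l + L_left l) = A_pos l + T_pos l + L_right l"
      unfolding T_neg_def L_left_def A_pos_def T_pos_def L_right_def A_def T_def sum_mult_add_const u_expansion
      by (simp add: algebra_simps of_nat_sum)
  qed
  have T_neg_char: "T_neg \<in> S" "x T_neg = (\<Prod>j<m. x (T j) ^ qm j)"
    using toric_pts_lincomb[OF x, of "{..<m}" T qm] T_S unfolding T_neg_def by auto
  have L_left_char: "L_left \<in> S" "x L_left = x L ^ (N * ((\<Sum>i<k. face_exp u i) + (\<Sum>j<m. qp j)))"
    using toric_pts_scale[OF x L_S, of "N * ((\<Sum>i<k. face_exp u i) + (\<Sum>j<m. qp j))"] unfolding L_left_def
      by auto
  have A_pos_char: "A_pos \<in> S" "x A_pos = (\<Prod>i<k. x (A i) ^ face_exp u i)"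
    using toric_pts_lincomb[OF x, of "{..<k}" A "face_exp u"] A_S unfolding A_pos_def by auto
  have T_pos_char: "T_pos \<in> S" "x T_pos = (\<Prod>j<m. x (T j) ^ qp j)"
    using toric_pts_lincomb[OF x, of "{..<m}" T qp] T_S unfolding T_pos_def by auto
  have L_right_char: "L_right \<in> S" "x L_right = x L ^ (N * (\<Sum>j<m. qm j))"
    using toric_pts_scale[OF x L_S, of "N * (\<Sum>j<m. qm j)"] unfolding L_right_def by auto
  have "x (\<lambda>l. u l + (T_neg l + L_left l)) = x u * (x T_neg * x L_left)"
    using toric_pts_add[OF x] u T_neg_char L_left_char dual_monoid_add by simp
  moreover have "x (\<lambda>l. A_pos l + T_pos l + L_right l) = x A_pos * x T_pos * x L_right"
    using toric_pts_add[OF x] A_pos_char T_pos_char L_right_char dual_monoid_add by simp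
  ultimately have "x u * (x T_neg * x L_left) = x A_pos * x T_pos * x L_right" using lattice_identity by simp
  then show ?thesis using T_neg_char L_left_char A_pos_char T_pos_char L_right_char by (simp add: qp_def qm_def mult.assoc)
qed

definition unit_coords :: "((nat \<Rightarrow> int) \<Rightarrow> 'K::field) \<Rightarrow> (nat \<Rightarrow> 'K) \<times> (nat \<Rightarrow> 'K)" where
  "unit_coords x = ((\<lambda>i. if i < k then x (A i) / x L ^ (2 * N) else 0),
                    (\<lambda>j. if j < m then x (T j) / x L ^ N else 0))"

lemma unit_nonzero_L: "x \<in> monoid_units S mu e \<Longrightarrow> x L \<noteq> 0"
  by (rule unit_nonzero_off_face[OF _ L_S face_exp_L])

lemma unit_coords_in_gchi_pts:
  assumes "x \<in> monoid_units S mu e"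
  shows "unit_coords x \<in> gchi_pts k m"
  using unit_nonzero_L[OF assms] unit_nonzero_off_face[OF assms T_S face_exp_T]
  by (auto simp: unit_coords_def gchi_pts_def)

lemma unit_value:
  assumes x: "x \<in> monoid_units S mu e" and u: "u \<in> S"
  shows "x u = (\<Prod>i<k. fst (unit_coords x) i ^ face_exp u i)
             * (\<Prod>j<m. snd (unit_coords x) j powi torus_pairing u j) * x L ^ (N * (\<Sum>i<k. face_exp u i))"
proof (rule solve_scaled_monomial_identity[OF unit_nonzero_L[OF x], where J="{..<m}" and I="{..<k}"
      and qp="\<lambda>j. nat (torus_pairing u j)" and qm="\<lambda>j. nat (- torus_pairing u j)"])
  let ?a = "fst (unit_coords x)" and ?t = "snd (unit_coords x)"
  have x_pts: "x \<in> toric_pts S" using x by (simp add: monoid_units_def)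
  have x_L: "x L \<noteq> 0" by (rule unit_nonzero_L[OF x])
  have x_A: "(\<Prod>i<k. x (A i) ^ c i) = (\<Prod>i<k. (?a i * x L ^ (2 * N)) ^ c i)" for c
    using x_L by (intro prod.cong refl) (simp add: unit_coords_def)
  have x_T: "(\<Prod>j<m. x (T j) ^ c j) = (\<Prod>j<m. (?t j * x L ^ N) ^ c j)" for c
    using x_L by (intro prod.cong refl) (simp add: unit_coords_def)
  show "\<And>j. j \<in> {..<m} \<Longrightarrow> ?t j \<noteq> 0"
    using gchi_ptsD[OF unit_coords_in_gchi_pts[OF x]] by simp
  show "x u * (\<Prod>j<m. (?t j * x L ^ N) ^ nat (- torus_pairing u j))
        * x L ^ (N * ((\<Sum>i<k. face_exp u i) + (\<Sum>j<m. nat (torus_pairing u j))))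
      = (\<Prod>i<k. (?a i * x L ^ (2 * N)) ^ face_exp u i) * (\<Prod>j<m. (?t j * x L ^ N) ^ nat (torus_pairing u j))
        * x L ^ (N * (\<Sum>j<m. nat (- torus_pairing u j)))"
    unfolding x_A[symmetric] x_T[symmetric] by (rule character_relation[OF x_pts u])
qed auto

lemma L_value_unit_coords: "x \<in> monoid_units S mu e \<Longrightarrow> L_value (snd (unit_coords x)) = x L"
  using unit_value[OF _ L_S, of x]
    by (simp add: face_exp_L L_value_def torus_pairing_def torus_weight_def)

lemma gchi_embed_unit_coords:
  assumes x: "x \<in> monoid_units S mu e"
  shows "gchi_embed (unit_coords x) = x"
proof
  fix u
  let ?t = "snd (unit_coords x)" and ?p = "\<Sum>i<k. face_exp u i"
  show "gchi_embed (unit_coords x) u = x u"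
  proof (cases "u \<in> S")
    case False
    then show ?thesis using x toric_pts_outside[of x S u]
      by (simp add: gchi_embed_def monoid_units_def)
  next
    case u: True
    have t: "j < m \<Longrightarrow> ?t j \<noteq> 0" for j by (rule gchi_ptsD[OF unit_coords_in_gchi_pts[OF x]])
    have "(\<Prod>j<m. ?t j powi torus_exp j u)
        = (\<Prod>j<m. ?t j powi torus_pairing u j * ?t j powi (int (N * ?p) * torus_weight j))"
      using t by (intro prod.cong refl)
        (simp add: torus_exp_def torus_pairing_def sum_face_pairing[OF u] power_int_add[symmetric] mult_ac)
    also have "\<dots> = (\<Prod>j<m. ?t j powi torus_pairing u j) * x L ^ (N * ?p)"
      by (simp only: prod.distrib prod_power_int_torus_weight L_value_unit_coords[OF x])
    finally show ?thesis
      using u unit_value[OF x u] by (simp add: gchi_embed_def mult.assoc)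
  qed
qed

lemma unit_coords_gchi_embed:
  assumes g: "g \<in> gchi_pts k m"
  shows "unit_coords (gchi_embed g) = g"
proof -
  have L: "gchi_embed g L \<noteq> 0" using L_value_nonzero[OF g] by (simp add: gchi_embed_L)
  have "fst (unit_coords (gchi_embed g)) = fst g"
    using g L by (auto simp: unit_coords_def gchi_embed_A gchi_embed_L gchi_pts_def)
  moreover have "snd (unit_coords (gchi_embed g)) = snd g"
    using g L by (auto simp: unit_coords_def gchi_embed_T gchi_embed_L gchi_pts_def)
  ultimately show ?thesis by (simp add: prod_eq_iff)
qed

lemma mu_regular: "u \<in> S \<Longrightarrow> toric_regular2 S (\<lambda>x y. (mu :: ((nat \<Rightarrow> int) \<Rightarrow> 'K::field) \<Rightarrow> _ \<Rightarrow> _) x y u)"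
  unfolding toric_regular2_def
proof (intro exI conjI ballI)
  assume u: "u \<in> S"
  let ?F = "(\<lambda>r. (left_exp u r, right_exp u r)) ` multi_indices k (face_exp u)"
  let ?c = "\<lambda>(a::nat \<Rightarrow> int, b::nat \<Rightarrow> int). (of_nat (multi_choose k (face_exp u) (face_exp b)) :: 'K)"
  show "finite ?F" by (simp add: finite_multi_indices)
  show "?F \<subseteq> S \<times> S" using left_exp_in_S[OF u] right_exp_in_S[OF u] by auto
  have inj: "inj_on (\<lambda>r. (left_exp u r, right_exp u r)) (multi_indices k (face_exp u))"
    by (rule inj_onI) (metis face_exp_right_exp prod.inject)
  fix x y :: "(nat \<Rightarrow> int) \<Rightarrow> 'K"
  show "mu x y u = (\<Sum>(a, b)\<in>?F. ?c (a, b) * x a * y b)"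
    using u by (simp add: sum.reindex[OF inj] mu_def face_exp_right_exp)
qed

lemma monoid_structure_mu: "monoid_structure S (mu :: ((nat \<Rightarrow> int) \<Rightarrow> 'K::field) \<Rightarrow> _ \<Rightarrow> _) e"
  unfolding monoid_structure_def
  using e_in_toric_pts mu_in_toric_pts mu_regular mu_assoc mu_e_left mu_e_right by auto

lemma gchi_embed_regular: "gchi_regular k m (\<lambda>g. gchi_embed g u)"
  unfolding gchi_regular_def
  by (rule exI[of _ "if u \<in> S then {(face_exp u, \<lambda>j. if j < m then torus_exp j u else 0)} else {}"],
      rule exI[of _ "\<lambda>_. 1"]) (auto simp: gchi_embed_def face_exp_def intro!: prod.cong)

lemma bij_betw_gchi_embed: "bij_betw gchi_embed (gchi_pts k m) (monoid_units S mu e)"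
  by (rule bij_betw_byWitness[where f'=unit_coords])
     (auto simp: unit_coords_gchi_embed gchi_embed_unit_coords gchi_embed_in_units unit_coords_in_gchi_pts)

lemma inv_into_gchi_embed:
  "x \<in> monoid_units S mu e \<Longrightarrow> inv_into (gchi_pts k m) gchi_embed x = unit_coords x"
  using bij_betw_gchi_embed
  by (intro inv_into_f_eq) (auto simp: bij_betw_def unit_coords_in_gchi_pts gchi_embed_unit_coords)

lemma loc_regular_inv_gchi_embed_fst:
  assumes i: "i < k"
  shows "loc_regular S (monoid_units S (mu :: ((nat \<Rightarrow> int) \<Rightarrow> 'K::field) \<Rightarrow> _ \<Rightarrow> _) e)
     (\<lambda>x. fst (inv_into (gchi_pts k m) gchi_embed x) i)"
proof (rule loc_regular_char_quotient)
  show "A i \<in> S" by (rule A_S[OF i])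
  show "(\<lambda>l. int (2 * N) * L l) \<in> S" using toric_pts_scale[OF e_in_toric_pts L_S] by blast
  fix x :: "(nat \<Rightarrow> int) \<Rightarrow> 'K" assume x: "x \<in> monoid_units S mu e"
  then have x_pts: "x \<in> toric_pts S" by (simp add: monoid_units_def)
  show "x (\<lambda>l. int (2 * N) * L l) \<noteq> 0"
    using toric_pts_scale[OF x_pts L_S, of "2 * N"] unit_nonzero_L[OF x] by simp
  show "fst (inv_into (gchi_pts k m) gchi_embed x) i * x (\<lambda>l. int (2 * N) * L l) = x (A i)"
    using toric_pts_scale[OF x_pts L_S, of "2 * N"] unit_nonzero_L[OF x] i
    by (simp add: inv_into_gchi_embed[OF x] unit_coords_def)
qed

lemma loc_regular_inv_gchi_embed_snd:
  assumes j: "j < m"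
  shows "loc_regular S (monoid_units S (mu :: ((nat \<Rightarrow> int) \<Rightarrow> 'K::field) \<Rightarrow> _ \<Rightarrow> _) e)
     (\<lambda>x. snd (inv_into (gchi_pts k m) gchi_embed x) j)"
proof (rule loc_regular_char_quotient)
  show "T j \<in> S" by (rule T_S[OF j])
  show "(\<lambda>l. int N * L l) \<in> S" using toric_pts_scale[OF e_in_toric_pts L_S] by blast
  fix x :: "(nat \<Rightarrow> int) \<Rightarrow> 'K" assume x: "x \<in> monoid_units S mu e"
  then have x_pts: "x \<in> toric_pts S" by (simp add: monoid_units_def)
  show "x (\<lambda>l. int N * L l) \<noteq> 0"
    using toric_pts_scale[OF x_pts L_S, of N] unit_nonzero_L[OF x] by simp
  show "snd (inv_into (gchi_pts k m) gchi_embed x) j * x (\<lambda>l. int N * L l) = x (T j)"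
    using toric_pts_scale[OF x_pts L_S, of N] unit_nonzero_L[OF x] j
    by (simp add: inv_into_gchi_embed[OF x] unit_coords_def)
qed

lemma monoid_with_units_gchi:
  "\<exists>(mu' :: ((nat \<Rightarrow> int) \<Rightarrow> 'K::field) \<Rightarrow> ((nat \<Rightarrow> int) \<Rightarrow> 'K) \<Rightarrow> ((nat \<Rightarrow> int) \<Rightarrow> 'K)) e'.
      monoid_structure S mu' e' \<and> units_iso_gchi S mu' e' k m chi"
proof (intro exI conjI)
  show "monoid_structure S (mu :: ((nat \<Rightarrow> int) \<Rightarrow> 'K::field) \<Rightarrow> _ \<Rightarrow> _) e"
    by (rule monoid_structure_mu)
  show "units_iso_gchi S (mu :: ((nat \<Rightarrow> int) \<Rightarrow> 'K::field) \<Rightarrow> _ \<Rightarrow> _) e k m chi"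
    unfolding units_iso_gchi_def
    using bij_betw_gchi_embed gchi_embed_mult gchi_embed_regular
      loc_regular_inv_gchi_embed_fst loc_regular_inv_gchi_embed_snd by blast
qed

end

section \<open>Existence of adapted data\<close>

lemma inj_on_zbasis:
  assumes "zbasis n B"
  shows "inj_on B {..<n}"
proof (rule inj_onI, rule ccontr)
  fix i i' assume i: "i \<in> {..<n}" and i': "i' \<in> {..<n}" and eq: "B i = B i'" and ne: "i \<noteq> i'"
  define c where "c x = (if x = i then 1 else if x = i' then -1 else (0::int))" for x
  have "(\<lambda>j. \<Sum>x<n. c x * B x j) = (\<lambda>j. 0)"
  proof
    fix j
    have "(\<Sum>x<n. c x * B x j) = (\<Sum>x<n. (if x = i then B i j else 0) - (if x = i' then B i' j else 0))"
      using ne by (intro sum.cong refl) (auto simp: c_def)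
    also have "\<dots> = 0" using i i' eq by (simp add: sum_subtractf)
    finally show "(\<Sum>x<n. c x * B x j) = 0" .
  qed
  then have "c i = 0" using assms i unfolding zbasis_def by blast
  then show False by (simp add: c_def)
qed

lemma zbasis_dual_basis:
  assumes "zbasis n B"
  obtains D where "\<And>i. i < n \<Longrightarrow> D i \<in> lat n"
    and "\<And>i j. i < n \<Longrightarrow> j < n \<Longrightarrow> pairing n (D i) (B j) = (if i = j then 1 else 0)"
    and "\<And>u. u \<in> lat n \<Longrightarrow> u = (\<lambda>l. \<Sum>j<n. pairing n u (B j) * D j l)"
proof -
  have B_lat: "\<And>i. i < n \<Longrightarrow> B i \<in> lat n"
    and span: "\<And>w. w \<in> lat n \<Longrightarrow> \<exists>c. w = (\<lambda>j. \<Sum>i<n. c i * B i j)"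
    and indep: "\<And>c. (\<lambda>j. \<Sum>i<n. c i * B i j) = (\<lambda>j. 0) \<Longrightarrow> \<forall>i<n. c i = 0"
    using assms unfolding zbasis_def by blast+
  define C where "C l = (SOME c. (\<lambda>j. if j = l then 1 else 0::int) = (\<lambda>j. \<Sum>i<n. c i * B i j))" for l
  have C: "(if j = l then 1 else 0) = (\<Sum>i<n. C l i * B i j)" if "l < n" for l j
  proof -
    have "(\<lambda>j. if j = l then 1 else 0::int) \<in> lat n" using that by (simp add: lat_def)
    then have "(\<lambda>j. if j = l then 1 else 0::int) = (\<lambda>j. \<Sum>i<n. C l i * B i j)"
      unfolding C_def by (rule someI_ex[OF span])
    from fun_cong[OF this, of j] show ?thesis by simp
  qed
  define D where "D i = (\<lambda>l. if l < n then C l i else 0)" for i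
  have "D i \<in> lat n" for i by (simp add: D_def lat_def)
  moreover have "pairing n (D i) (B j) = (if i = j then 1 else 0)" if i: "i < n" and j: "j < n" for i j
  proof -
    define c where "c i' = (\<Sum>l<n. B j l * C l i') - (if i' = j then 1 else 0)" for i'
    have "(\<lambda>j'. \<Sum>i'<n. c i' * B i' j') = (\<lambda>j'. 0)"
    proof
      fix j'
      have "(\<Sum>i'<n. (\<Sum>l<n. B j l * C l i') * B i' j') = (\<Sum>l<n. B j l * (\<Sum>i'<n. C l i' * B i' j'))"
        by (simp only: sum_distrib_right sum_distrib_left mult.assoc) (rule sum.swap)
      also have "\<dots> = (\<Sum>l<n. B j l * (if j' = l then 1 else 0))"
        by (intro sum.cong refl) (simp add: C)
      also have "\<dots> = B j j'"
        using B_lat[OF j]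
          by (auto simp: lat_def if_distrib[of "\<lambda>x. B j _ * x"] sum.delta' cong: if_cong)
      finally have "(\<Sum>i'<n. (\<Sum>l<n. B j l * C l i') * B i' j') = B j j'" .
      moreover have "(\<Sum>i'<n. (if i' = j then 1 else 0) * B i' j') = B j j'"
        using j by (simp add: if_distrib[of "\<lambda>x. x * _"] sum.delta' cong: if_cong)
      ultimately show "(\<Sum>i'<n. c i' * B i' j') = 0"
        unfolding c_def left_diff_distrib sum_subtractf by simp
    qed
    then have "c i = 0" using indep i by blast
    then show ?thesis using i by (simp add: c_def pairing_def D_def mult.commute)
  qed
  moreover have "u = (\<lambda>l. \<Sum>j<n. pairing n u (B j) * D j l)" if u: "u \<in> lat n" for u
  proof
    fix l
    show "u l = (\<Sum>j<n. pairing n u (B j) * D j l)"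
    proof (cases "l < n")
      case False then show ?thesis using u by (simp add: lat_def D_def)
    next
      case True
      have "(\<Sum>j<n. pairing n u (B j) * D j l) = (\<Sum>j<n. \<Sum>l'<n. u l' * B j l' * C l j)"
        using True by (simp add: pairing_def D_def sum_distrib_right)
      also have "\<dots> = (\<Sum>l'<n. u l' * (\<Sum>j<n. C l j * B j l'))"
        by (simp only: sum_distrib_left, subst sum.swap, simp add: mult_ac)
      also have "\<dots> = (\<Sum>l'<n. u l' * (if l' = l then 1 else 0))"
        using True by (intro sum.cong refl) (simp add: C[symmetric])
      also have "\<dots> = u l"
        using True by (simp add: if_distrib[of "\<lambda>x. u _ * x"] sum.delta' cong: if_cong)
      finally show ?thesis by simp
    qed
  qed
  ultimately show ?thesis using that by blast
qed

lemma clear_denominators: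
  fixes x :: "nat \<Rightarrow> rat"
  obtains L d where "(d::int) > 0" "L \<in> lat n" "\<And>i. i < n \<Longrightarrow> of_int (L i) = of_int d * x i"
proof -
  define num where "num i = fst (quotient_of (x i))" for i
  define den where "den i = snd (quotient_of (x i))" for i
  have den: "den i > 0" for i unfolding den_def by (rule quotient_of_denom_pos')
  have x: "x i = of_int (num i) / of_int (den i)" for i
    unfolding num_def den_def by (rule quotient_of_div) simp
  define d where "d = (\<Prod>i<n. den i)"
  define L where "L i = (if i < n then num i * (\<Prod>i'\<in>{..<n}-{i}. den i') else 0)" for i
  have "d > 0" unfolding d_def using den by (simp add: prod_pos)
  moreover have "L \<in> lat n" by (simp add: L_def lat_def)
  moreover have "of_int (L i) = of_int d * x i" if i: "i < n" for i
  proof -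
    have "d = den i * (\<Prod>i'\<in>{..<n}-{i}. den i')" unfolding d_def using i by (simp add: prod.remove)
    then show ?thesis using i den[of i] by (simp add: L_def x field_simps)
  qed
  ultimately show ?thesis using that by blast
qed

lemma finite_int_bound:
  fixes n :: nat
  assumes "finite V"
  obtains N :: nat where "\<And>v i. v \<in> V \<Longrightarrow> i < n \<Longrightarrow> (f v i :: int) \<le> int N"
proof
  fix v i assume v: "v \<in> V" and i: "i < n"
  have "f v i \<le> \<bar>f v i\<bar>" by (rule abs_ge_self)
  also have "\<dots> \<le> (\<Sum>i<n. \<bar>f v i\<bar>)"
    using i by (intro member_le_sum) auto
  also have "\<dots> \<le> (\<Sum>v\<in>V. \<Sum>i<n. \<bar>f v i\<bar>)"
    using v assms by (intro member_le_sum sum_nonneg) auto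
  finally show "f v i \<le> int (nat (\<Sum>v\<in>V. \<Sum>i<n. \<bar>f v i\<bar>))" by linarith
qed

lemma of_int_in_qcone:
  assumes "finite V" "v \<in> V"
  shows "of_int \<circ> v \<in> qcone V"
  unfolding qcone_def
proof (intro CollectI exI[of _ "\<lambda>w. if w = v then 1 else 0"] conjI ballI)
  show "of_int \<circ> v = (\<lambda>i. \<Sum>w\<in>V. (if w = v then 1 else 0) * of_int (w i))"
    using assms by (simp add: comp_def if_distrib[of "\<lambda>x. x * _"] sum.delta' cong: if_cong)
qed simp

lemma qcone_pairing:
  assumes "x \<in> qcone V"
  obtains l where "\<forall>v\<in>V. 0 \<le> l v"
    and "\<And>w. (\<Sum>j<n. of_int (w j) * x j) = (\<Sum>v\<in>V. l v * of_int (pairing n w v))"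
proof -
  obtain l where l: "\<forall>v\<in>V. 0 \<le> l v" and x: "x = (\<lambda>j. \<Sum>v\<in>V. l v * of_int (v j))"
    using assms unfolding qcone_def by blast
  have "(\<Sum>j<n. of_int (w j) * x j) = (\<Sum>v\<in>V. l v * of_int (pairing n w v))" for w
    unfolding x of_int_pairing sum_distrib_left
    by (subst sum.swap) (simp add: sum_distrib_left mult_ac)
  with l that show ?thesis by blast
qed

lemma dual_monoid_nonneg_on_qcone:
  assumes "u \<in> dual_monoid n V" and "x \<in> qcone V"
  shows "0 \<le> (\<Sum>j<n. of_int (u j) * x j)"
proof -
  obtain l :: "(nat \<Rightarrow> int) \<Rightarrow> rat" where l: "\<forall>v\<in>V. 0 \<le> l v"
    and x: "\<And>w. (\<Sum>j<n. of_int (w j) * x j) = (\<Sum>v\<in>V. l v * of_int (pairing n w v))"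
    using qcone_pairing[OF assms(2), where n=n] by blast
  have "0 \<le> pairing n u v" if "v \<in> V" for v
    using assms(1) that by (simp add: dual_monoid_pairing)
  then show ?thesis
    unfolding x using l by (intro sum_nonneg mult_nonneg_nonneg) auto
qed

lemma is_face_integral:
  assumes "is_face n C F"
  obtains L where "L \<in> lat n" and "\<And>x. x \<in> C \<Longrightarrow> 0 \<le> (\<Sum>i<n. of_int (L i) * x i)"
    and "F = {x \<in> C. (\<Sum>i<n. of_int (L i) * x i) = 0}"
proof -
  obtain q where q_nonneg: "\<forall>x\<in>C. 0 \<le> (\<Sum>i<n. q i * x i)" and F: "F = {x \<in> C. (\<Sum>i<n. q i * x i) = 0}"
    using assms unfolding is_face_def by blast
  obtain L d where d: "(d::int) > 0" and L: "L \<in> lat n" and Lq: "\<And>i. i < n \<Longrightarrow> of_int (L i) = of_int d * q i"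
    using clear_denominators[of n q] by blast
  have scaled: "(\<Sum>i<n. of_int (L i) * x i) = of_int d * (\<Sum>i<n. q i * x i)" for x :: "nat \<Rightarrow> rat"
    by (simp add: Lq sum_distrib_left mult.assoc)
  show ?thesis
  proof
    show "L \<in> lat n" by (fact L)
    show "0 \<le> (\<Sum>i<n. of_int (L i) * x i)" if "x \<in> C" for x
      using q_nonneg that d by (simp add: scaled)
    show "F = {x \<in> C. (\<Sum>i<n. of_int (L i) * x i) = 0}"
      using d by (simp add: scaled F)
  qed
qed

lemma qcone_basis_coords:
  assumes k_le_n: "k \<le> n" and inj: "inj_on B {..<k}"
    and dual: "\<And>i j. i < n \<Longrightarrow> j < n \<Longrightarrow> pairing n (D i) (B j) = (if i = j then 1 else 0)"
    and v: "of_int \<circ> v \<in> qcone (B ` {..<k})"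
  shows "(\<forall>i<k. 0 \<le> pairing n (D i) v) \<and> (\<forall>w. pairing n w v = (\<Sum>i<k. pairing n (D i) v * pairing n w (B i)))"
proof -
  obtain l :: "(nat \<Rightarrow> int) \<Rightarrow> rat" where l: "\<forall>b\<in>B ` {..<k}. 0 \<le> l b"
    and lv: "\<And>w. (\<Sum>j<n. of_int (w j) * (of_int \<circ> v) j) = (\<Sum>b\<in>B ` {..<k}. l b * of_int (pairing n w b))"
    using qcone_pairing[OF v, where n=n] by blast
  have pairing_v: "(of_int (pairing n w v) :: rat) = (\<Sum>i<k. l (B i) * of_int (pairing n w (B i)))" for w
    using lv[of w] by (simp add: of_int_pairing sum.reindex[OF inj])
  have D_v: "(of_int (pairing n (D i') v) :: rat) = l (B i')" if "i' < k" for i'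
  proof -
    have "(of_int (pairing n (D i') v) :: rat) = (\<Sum>i<k. l (B i) * (if i' = i then 1 else 0))"
      unfolding pairing_v using that k_le_n dual by (intro sum.cong refl) auto
    also have "\<dots> = l (B i')" using that
      by (simp add: if_distrib[of "\<lambda>x. _ * x"] sum.delta cong: if_cong)
    finally show ?thesis .
  qed
  have "0 \<le> pairing n (D i) v" if "i < k" for i
    proof -
    have "0 \<le> l (B i)" using l that by blast
    then show ?thesis using D_v[OF that] by simp
  qed
  moreover have "pairing n w v = (\<Sum>i<k. pairing n (D i) v * pairing n w (B i))" for w
  proof -
    have "(of_int (pairing n w v) :: rat) = of_int (\<Sum>i<k. pairing n (D i) v * pairing n w (B i))"
      unfolding pairing_v by (simp add: D_v)
    then show ?thesis by (simp only: of_int_eq_iff)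
  qed
  ultimately show ?thesis by blast
qed

lemma face_adapted_data_exists:
  assumes finite: "finite V" and face: "is_face n (qcone V) F" and regular: "regular_face n F k"
  shows "\<exists>B D L N. face_adapted_data n k V B D L N chi"
proof -
  obtain B where k_le_n: "k \<le> n" and zb: "zbasis n B" and F: "F = qcone (B ` {..<k})"
    using regular unfolding regular_face_def by blast
  obtain D where D_lat: "\<And>i. i < n \<Longrightarrow> D i \<in> lat n"
    and dual: "\<And>i j. i < n \<Longrightarrow> j < n \<Longrightarrow> pairing n (D i) (B j) = (if i = j then 1 else 0)"
    and expand: "\<And>u. u \<in> lat n \<Longrightarrow> u = (\<lambda>l. \<Sum>j<n. pairing n u (B j) * D j l)"
    using zbasis_dual_basis[OF zb] by blast
  obtain L where L_lat: "L \<in> lat n" and L_nonneg: "\<And>x. x \<in> qcone V \<Longrightarrow> 0 \<le> (\<Sum>i<n. of_int (L i) * x i)"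
    and F_L: "F = {x \<in> qcone V. (\<Sum>i<n. of_int (L i) * x i) = 0}"
    using is_face_integral[OF face] by blast
  obtain N where N: "\<And>v i. v \<in> V \<Longrightarrow> i < n \<Longrightarrow>
      \<bar>pairing n (D i) v\<bar> + \<bar>\<Sum>j<n-k. chi i j * pairing n (D (k+j)) v\<bar> \<le> int N"
    using finite_int_bound[OF finite, where f="\<lambda>v i. \<bar>pairing n (D i) v\<bar> + \<bar>\<Sum>j<n-k. chi i j * pairing n (D (k+j)) v\<bar>"]
    by blast
  have rat_pairing: "(of_int (pairing n w v) :: rat) = (\<Sum>i<n. of_int (w i) * (of_int \<circ> v) i)" for w v
    by (simp add: of_int_pairing)
  have ray_in_F: "of_int \<circ> B i \<in> F" if "i < k" for i
    unfolding F using that by (intro of_int_in_qcone) auto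
  have "face_adapted_data n k V B D L N chi"
  proof
    show "pairing n L (B i) = 0" if "i < k" for i
    proof -
      have "(of_int (pairing n L (B i)) :: rat) = 0"
        using ray_in_F[OF that] unfolding F_L rat_pairing by blast
      then show ?thesis by simp
    qed
    show "0 \<le> pairing n L v" if "v \<in> V" for v
    proof -
      have "(0::rat) \<le> of_int (pairing n L v)"
        unfolding rat_pairing by (rule L_nonneg[OF of_int_in_qcone[OF finite that]])
      then show ?thesis by simp
    qed
    show "(\<forall>i<k. 0 \<le> pairing n (D i) v) \<and> (\<forall>w. pairing n w v = (\<Sum>i<k. pairing n (D i) v * pairing n w (B i)))"
      if "v \<in> V" "pairing n L v = 0" for v
    proof (rule qcone_basis_coords[OF k_le_n _ dual])
      show "inj_on B {..<k}" using inj_on_subset[OF inj_on_zbasis[OF zb]] k_le_n by auto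
      have "(\<Sum>i<n. of_int (L i) * (of_int \<circ> v) i) = (of_int (pairing n L v) :: rat)"
        by (rule rat_pairing[symmetric])
      then have "of_int \<circ> v \<in> F"
        using that of_int_in_qcone[OF finite that(1)] unfolding F_L by simp
      then show "of_int \<circ> v \<in> qcone (B ` {..<k})" by (simp only: F)
    qed
    show "0 \<le> pairing n u (B i)" if "u \<in> dual_monoid n V" "i < k" for u i
    proof -
      have "(0::rat) \<le> of_int (pairing n u (B i))"
        unfolding rat_pairing using dual_monoid_nonneg_on_qcone[OF that(1)] ray_in_F[OF that(2)] F_L
          by blast
      then show ?thesis by simp
    qed
    show "k \<le> n" by (fact k_le_n)
    show "L \<in> lat n" by (fact L_lat)
    show "D i \<in> lat n" if "i < n" for i using that by (rule D_lat)
    show "pairing n (D i) (B j) = (if i = j then 1 else 0)" if "i < n" "j < n" for i j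
      using that by (rule dual)
    show "u = (\<lambda>l. \<Sum>j<n. pairing n u (B j) * D j l)" if "u \<in> lat n" for u
      using that by (rule expand)
    show "\<bar>pairing n (D i) v\<bar> + \<bar>\<Sum>j<n - k. chi i j * pairing n (D (k + j)) v\<bar> \<le> int N"
      if "v \<in> V" "i < n" for v i
      using that by (rule N)
  qed
  then show ?thesis by blast
qed

theorem mainTheorem3:
  fixes n k :: nat and V :: "(nat \<Rightarrow> int) set" and F :: "(nat \<Rightarrow> rat) set"
    and chi :: "nat \<Rightarrow> nat \<Rightarrow> int"
  assumes "alg_closed TYPE('K::field_char_0)"
    and "finite V" and "V \<subseteq> lat n"
    and "strongly_convex (qcone V)"
    and "is_face n (qcone V) F"
    and "regular_face n F k"
  shows "\<exists>(mu :: ((nat \<Rightarrow> int) \<Rightarrow> 'K) \<Rightarrow> ((nat \<Rightarrow> int) \<Rightarrow> 'K) \<Rightarrow> ((nat \<Rightarrow> int) \<Rightarrow> 'K)) e.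
            monoid_structure (dual_monoid n V) mu e
          \<and> units_iso_gchi (dual_monoid n V) mu e k (n - k) chi"
proof -
  obtain B D L N where "face_adapted_data n k V B D L N chi"
    using face_adapted_data_exists[OF assms(2,5,6)] by blast
  then show ?thesis by (rule face_adapted_data.monoid_with_units_gchi)
qed

end
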